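(* Let $0<\gamma<\alpha<1$, $f\in C^1[0,1]$ with $f(0)=0$, $h=\dot f$, $D\in C^1[0,1]$ with $D>0$ on $(0,\alpha)$ and $D<0$ on $(\alpha,1)$, $g\in C^0[0,1]$ with $g<0$ on $(0,\gamma)$, $g>0$ on $(\gamma,1)$, $g(0)=g(\gamma)=g(1)=0$, $q=Dg$. For $c\in\mathbb R$ consider the problem: find $z\in C^0[0,\alpha]\cap C^1(0,\alpha)$ with $\dot z=h-c-q/z$ on $(0,\alpha)$, $z<0$ on $(0,\alpha)$, $z(0)=z(\alpha)=0$. This problem admits a solution for some $c$ if and only if $c^*_{1.1}<c^*_{1.2}$. In that case solutions occur only for a unique real value $c=c_1^*\in(c^*_{1.1},c^*_{1.2})$, and the corresponding solution $z$ is unique.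
   Context: Threshold $c^*$: let $\sigma_1<\sigma_2$ and $H,Q$ continuous on $[\sigma_1,\sigma_2]$ with $Q>0$ on $(\sigma_1,\sigma_2)$, $Q(\sigma_1)=Q(\sigma_2)=0$. For every $c\in\mathbb R$ there is a unique $\zeta_c\in C^0[\sigma_1,\sigma_2]\cap C^1(\sigma_1,\sigma_2)$ with $\dot\zeta_c=H-c-Q/\zeta_c$ and $\zeta_c<0$ on $(\sigma_1,\sigma_2)$ and $\zeta_c(\sigma_2)=0$; define $c^*(Q;H;\sigma_1,\sigma_2):=\sup\{c\in\mathbb R:\zeta_c(\sigma_1)<0\}\in(-\infty,\infty]$. Set $\tilde q(\phi)=-q(1-\phi)$, $\tilde h(\phi)=-h(1-\phi)$. Define $c^*_{1.1}:=-c^*(\tilde q;\tilde h;\max\{1-\alpha,1-\gamma\},1)$ and $c^*_{1.2}:=c^*(q;h;\gamma,\alpha)$. *)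

theory Defs
  imports "HOL-Analysis.Analysis" "HOL-Library.Extended_Real"
begin

definition zeta_cond :: "(real \<Rightarrow> real) \<Rightarrow> (real \<Rightarrow> real) \<Rightarrow> real \<Rightarrow> real \<Rightarrow> real \<Rightarrow> (real \<Rightarrow> real) \<Rightarrow> bool" where
  "zeta_cond Q H s1 s2 c \<zeta> \<longleftrightarrow>
     continuous_on {s1..s2} \<zeta> \<and>
     (\<forall>x\<in>{s1<..<s2}. (\<zeta> has_real_derivative (H x - c - Q x / \<zeta> x)) (at x)) \<and>
     (\<forall>x\<in>{s1<..<s2}. \<zeta> x < 0) \<and> \<zeta> s2 = 0"

definition zeta_c :: "(real \<Rightarrow> real) \<Rightarrow> (real \<Rightarrow> real) \<Rightarrow> real \<Rightarrow> real \<Rightarrow> real \<Rightarrow> real \<Rightarrow> real" where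
  "zeta_c Q H s1 s2 c = (THE \<zeta>. zeta_cond Q H s1 s2 c \<zeta> \<and> (\<forall>x. x \<notin> {s1..s2} \<longrightarrow> \<zeta> x = 0))"

definition cstar :: "(real \<Rightarrow> real) \<Rightarrow> (real \<Rightarrow> real) \<Rightarrow> real \<Rightarrow> real \<Rightarrow> ereal" where
  "cstar Q H s1 s2 = Sup {ereal c | c. zeta_c Q H s1 s2 c s1 < 0}"

definition bvp_sol :: "(real \<Rightarrow> real) \<Rightarrow> (real \<Rightarrow> real) \<Rightarrow> real \<Rightarrow> real \<Rightarrow> (real \<Rightarrow> real) \<Rightarrow> bool" where
  "bvp_sol h q \<alpha> c z \<longleftrightarrow>
     continuous_on {0..\<alpha>} z \<and>
     (\<forall>x\<in>{0<..<\<alpha>}. (z has_real_derivative (h x - c - q x / z x)) (at x)) \<and>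
     (\<forall>x\<in>{0<..<\<alpha>}. z x < 0) \<and> z 0 = 0 \<and> z \<alpha> = 0"

end

theory Submission
  imports Defs
begin

(* A solution z of the boundary value problem is determined by its two halves: on [\<gamma>, \<alpha>] it is
   the \<zeta>_c of (q; h; \<gamma>, \<alpha>), and after the reflection x \<mapsto> 1 - x its restriction to [0, \<gamma>]
   is the \<zeta>_(-c) of the reflected problem on [1 - \<gamma>, 1]. Conversely, as both halves solve the
   same equation, gluing them gives a solution exactly when their values at \<gamma> agree and are
   negative. By the comparison principle a(c) = \<zeta>_c(\<gamma>) is nondecreasing in c, strictly so where
   it is negative, and the value b(c) of the reflected half at \<gamma> is nonincreasing; both are
   continuous and tend to -\<infinity> at opposite ends at least linearly, so they cross, and they cross
   at most once at a negative value. Since a(c) < 0 iff c < c*_1.2 and b(c) < 0 iff c > c*_1.1,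
   there is a crossing with negative value iff c*_1.1 < c*_1.2.

   The functions \<zeta>_c exist because the energy W = \<zeta>^2/2 solves
   W' = -(Q + (H - c) sqrt(2 W)), W(s2) = 0; after regularising the square root this equation is
   Lipschitz and is solved by Picard iteration, and the regularised solutions decrease
   monotonically to a solution of the original one. *)

lemma continuous_on_Icc_abs_bounded:
  fixes f :: "real \<Rightarrow> real"
  assumes "continuous_on {a..b} f"
  obtains K where "K \<ge> 0" "\<And>t. t \<in> {a..b} \<Longrightarrow> \<bar>f t\<bar> \<le> K"
proof -
  have "bounded (f ` {a..b})" by (rule compact_imp_bounded[OF compact_continuous_image[OF assms]]) simp
  then obtain K where "\<forall>x\<in>f ` {a..b}. norm x \<le> K" by (auto simp: bounded_iff)
  thus ?thesis by (intro that[of "max K 0"]) (auto intro: max.coboundedI1)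
qed

lemma le_on_Icc_if_le_on_open:
  fixes f g :: "real \<Rightarrow> real"
  assumes "a < b" "continuous_on {a..b} f" "continuous_on {a..b} g"
    and "\<And>x. a < x \<Longrightarrow> x < b \<Longrightarrow> f x \<le> g x" and "x \<in> {a..b}"
  shows "f x \<le> g x"
  using continuous_le_on_closure[of "{a<..<b}" "\<lambda>x. f x - g x" x 0] assms
  by (auto simp: closure_greaterThanLessThan intro: continuous_intros)

lemma positive_at_right_end_if_deriv_nonneg_where_pos:
  fixes \<phi> :: "real \<Rightarrow> real"
  assumes ab: "a \<le> b" and cont: "continuous_on {a..b} \<phi>" and pa: "\<phi> a > 0"
    and der: "\<And>t. a < t \<Longrightarrow> t < b \<Longrightarrow> \<phi> t > 0 \<Longrightarrow> \<exists>D. (\<phi> has_real_derivative D) (at t) \<and> D \<ge> 0"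
  shows "\<phi> b > 0"
proof (rule ccontr)
  assume nb: "\<not> \<phi> b > 0"
  let ?S = "{a..b} \<inter> \<phi> -` {..0}"
  have closed: "closed ?S" by (rule continuous_closed_preimage) (use cont in auto)
  have bdd: "bdd_below ?S" by (rule bdd_belowI[of _ a]) auto
  define s where "s = Inf ?S"
  have "b \<in> ?S" using nb ab by auto
  hence sS: "s \<in> ?S" unfolding s_def using closed_contains_Inf[OF _ bdd closed] by blast
  have pos_before: "\<phi> t > 0" if "a \<le> t" "t < s" for t
  proof (rule ccontr)
    assume "\<not> \<phi> t > 0"
    hence "t \<in> ?S" using that sS by auto
    hence "s \<le> t" unfolding s_def using cInf_lower[OF _ bdd] by blast
    thus False using that by simp
  qed
  have "a < s" using sS pa by (cases "a = s") auto
  have "\<phi> a \<le> \<phi> s"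
  proof (rule DERIV_nonneg_imp_increasing_open[OF order.strict_implies_order[OF \<open>a < s\<close>]])
    show "continuous_on {a..s} \<phi>" using cont sS by (auto intro: continuous_on_subset)
    fix x assume "a < x" "x < s"
    thus "\<exists>y. DERIV \<phi> x :> y \<and> y \<ge> 0" using der[of x] pos_before[of x] sS by auto
  qed
  thus False using sS pa by auto
qed

lemma has_real_derivative_of_backward_integral_equation:
  fixes g y :: "real \<Rightarrow> real"
  assumes cg: "continuous_on {a..b} g"
    and eq: "\<And>x. x \<in> {a..b} \<Longrightarrow> (g has_integral (y0 - y x)) {x..b}"
    and x: "a < x" "x < b"
  shows "(y has_real_derivative g x) (at x)"
proof -
  have "((\<lambda>u. integral {u..b} g) has_real_derivative - g x) (at x within {a..b})"
    using integral_has_vector_derivative'[OF cg] x has_real_derivative_iff_has_vector_derivative by auto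
  hence "((\<lambda>u. y0 - integral {u..b} g) has_real_derivative g x) (at x)"
    using at_within_Icc_at[OF x] by (auto intro!: derivative_eq_intros)
  thus ?thesis
  proof (rule has_field_derivative_transform_within_open[of _ _ _ "{a<..<b}"])
    fix u assume "u \<in> {a<..<b}"
    thus "y0 - integral {u..b} g = y u" using integral_unique[OF eq[of u]] by simp
  qed (use x in auto)
qed

lemma has_real_derivative_at_glue_point:
  fixes z E :: "real \<Rightarrow> real"
  assumes um: "u < m" and mv: "m < v" and cz: "continuous_on {u..v} z" and cE: "continuous_on {u..v} E"
    and dz: "\<And>x. u < x \<Longrightarrow> x < v \<Longrightarrow> x \<noteq> m \<Longrightarrow> (z has_real_derivative E x) (at x)"
  shows "(z has_real_derivative E m) (at m)"
proof -
  have ftc: "(E has_integral (z t - z s)) {s..t}" if st: "u \<le> s" "s \<le> t" "t \<le> v" "t \<le> m \<or> m \<le> s" for s t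
  proof (rule fundamental_theorem_of_calculus_interior[OF st(2)])
    show "continuous_on {s..t} z" using cz st by (auto intro: continuous_on_subset)
    fix x assume "x \<in> {s<..<t}"
    thus "(z has_vector_derivative E x) (at x)"
      using dz st has_real_derivative_iff_has_vector_derivative by auto
  qed
  have int: "(E has_integral (z t - z u)) {u..t}" if t: "u \<le> t" "t \<le> v" for t
  proof (cases "t \<le> m")
    case False
    have "(E has_integral ((z m - z u) + (z t - z m))) {u..t}"
      by (rule has_integral_combine[of u m t]) (use um False t ftc in auto)
    thus ?thesis by simp
  qed (use ftc t in auto)
  have "((\<lambda>t. integral {u..t} E) has_real_derivative E m) (at m within {u..v})"
    using integral_has_vector_derivative[OF cE, of m] um mv has_real_derivative_iff_has_vector_derivative by auto
  hence "((\<lambda>t. z u + integral {u..t} E) has_real_derivative E m) (at m)"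
    using at_within_Icc_at[OF um mv] by (auto intro!: derivative_eq_intros)
  thus ?thesis
  proof (rule has_field_derivative_transform_within_open[of _ _ _ "{u<..<v}"])
    fix x assume "x \<in> {u<..<v}"
    thus "z u + integral {u..x} E = z x" using integral_unique[OF int[of x]] by simp
  qed (use um mv in auto)
qed

section \<open>Picard iteration for backward integral equations\<close>

primrec picard_iter :: "(real \<Rightarrow> real \<Rightarrow> real) \<Rightarrow> real \<Rightarrow> real \<Rightarrow> nat \<Rightarrow> real \<Rightarrow> real" where
  "picard_iter G b y0 0 = (\<lambda>_. y0)"
| "picard_iter G b y0 (Suc n) = (\<lambda>x. y0 - integral {x..b} (\<lambda>t. G t (picard_iter G b y0 n t)))"

lemma power_integral_to_right_end:
  fixes b x :: real
  assumes "x \<le> b"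
  shows "((\<lambda>t. (b - t) ^ n) has_integral (b - x) ^ Suc n / real (Suc n)) {x..b}"
proof -
  define F where "F t = (-1) * (b - t) ^ Suc n / real (Suc n)" for t
  have "((\<lambda>t. (b - t) ^ n) has_integral (F b - F x)) {x..b}"
  proof (rule fundamental_theorem_of_calculus[OF assms])
    fix t assume "t \<in> {x..b}"
    have "(F has_real_derivative (b - t) ^ n) (at t within {x..b})"
      unfolding F_def by (rule derivative_eq_intros refl | simp)+
    thus "(F has_vector_derivative (b - t) ^ n) (at t within {x..b})"
      using has_real_derivative_iff_has_vector_derivative by blast
  qed
  thus ?thesis by (simp add: F_def)
qed

locale backward_lipschitz_ode =
  fixes G :: "real \<Rightarrow> real \<Rightarrow> real" and a b L y0 :: real
  assumes le: "a \<le> b" and L_nonneg: "L \<ge> 0"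
    and lipschitz: "\<And>t u v. t \<in> {a..b} \<Longrightarrow> \<bar>G t u - G t v\<bar> \<le> L * \<bar>u - v\<bar>"
    and continuous_superposition: "\<And>p. continuous_on {a..b} p \<Longrightarrow> continuous_on {a..b} (\<lambda>t. G t (p t))"
begin

abbreviation p where "p \<equiv> picard_iter G b y0"

lemma continuous_on_picard_iter: "continuous_on {a..b} (p n)"
proof (induction n)
  case (Suc n)
  have "continuous_on {a..b} (\<lambda>x. integral {x..b} (\<lambda>t. G t (p n t)))"
    by (rule indefinite_integral_continuous_1') (rule integrable_continuous_real[OF continuous_superposition[OF Suc]])
  thus ?case by (auto intro!: continuous_intros)
qed simp

lemma integrable_picard_iter: "x \<in> {a..b} \<Longrightarrow> (\<lambda>t. G t (p n t)) integrable_on {x..b}"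
  using integrable_subinterval_real[OF integrable_continuous_real[OF continuous_superposition[OF continuous_on_picard_iter]]]
  by auto

lemma picard_iter_step_bound:
  assumes K0: "\<And>t. t \<in> {a..b} \<Longrightarrow> \<bar>G t y0\<bar> \<le> K0"
  shows "x \<in> {a..b} \<Longrightarrow> \<bar>p (Suc n) x - p n x\<bar> \<le> K0 * L ^ n / fact (Suc n) * (b - x) ^ Suc n"
proof (induction n arbitrary: x)
  case 0
  have "continuous_on {x..b} (\<lambda>t. G t y0)"
    using continuous_on_subset[OF continuous_superposition[OF continuous_on_const]] 0 by auto
  hence "norm (integral {x..b} (\<lambda>t. G t y0)) \<le> K0 * (b - x)"
    using integral_bound[of x b "\<lambda>t. G t y0" K0] K0 0 by auto
  thus ?case by simp
next
  case (Suc n)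
  let ?C = "L * (K0 * L ^ n / fact (Suc n))"
  have "\<bar>p (Suc (Suc n)) x - p (Suc n) x\<bar> = norm (integral {x..b} (\<lambda>t. G t (p (Suc n) t) - G t (p n t)))"
    using integral_diff[OF integrable_picard_iter[OF Suc.prems, of "Suc n"] integrable_picard_iter[OF Suc.prems, of n]]
    by simp
  also have "\<dots> \<le> integral {x..b} (\<lambda>t. ?C * (b - t) ^ Suc n)"
  proof (rule integral_norm_bound_integral)
    show "(\<lambda>t. G t (p (Suc n) t) - G t (p n t)) integrable_on {x..b}"
      by (intro integrable_diff integrable_picard_iter Suc.prems)
    show "(\<lambda>t. ?C * (b - t) ^ Suc n) integrable_on {x..b}"
      by (intro integrable_continuous_real continuous_intros)
    fix t assume "t \<in> {x..b}"
    hence t: "t \<in> {a..b}" using Suc.prems by auto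
    have "\<bar>G t (p (Suc n) t) - G t (p n t)\<bar> \<le> L * \<bar>p (Suc n) t - p n t\<bar>" by (rule lipschitz[OF t])
    also have "\<dots> \<le> L * (K0 * L ^ n / fact (Suc n) * (b - t) ^ Suc n)"
      using Suc.IH[OF t] L_nonneg by (rule mult_left_mono)
    finally show "norm (G t (p (Suc n) t) - G t (p n t)) \<le> ?C * (b - t) ^ Suc n"
      by (simp add: mult.assoc)
  qed
  also have "\<dots> = ?C * ((b - x) ^ Suc (Suc n) / real (Suc (Suc n)))"
    by (intro integral_unique has_integral_mult_right power_integral_to_right_end) (use Suc.prems in auto)
  also have "\<dots> = K0 * L ^ Suc n / fact (Suc (Suc n)) * (b - x) ^ Suc (Suc n)"
    by (simp add: field_simps)
  finally show ?case .
qed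

text \<open>The step bounds are dominated by the terms of an exponential series, uniformly on
  [a, b].\<close>
lemma picard_iter_converges:
  obtains y B where "\<And>x. x \<in> {a..b} \<Longrightarrow> (\<lambda>n. p n x) \<longlonglongrightarrow> y x"
    and "\<And>n x. x \<in> {a..b} \<Longrightarrow> \<bar>p n x - y0\<bar> \<le> B"
proof -
  obtain K0 where K0: "K0 \<ge> 0" "\<And>t. t \<in> {a..b} \<Longrightarrow> \<bar>G t y0\<bar> \<le> K0"
    using continuous_on_Icc_abs_bounded[OF continuous_superposition[OF continuous_on_const]] by blast
  define \<beta> where "\<beta> n = K0 * (b - a) * (L * (b - a)) ^ n / fact (Suc n)" for n
  have \<beta>_nonneg: "\<beta> n \<ge> 0" for n using le K0 L_nonneg by (simp add: \<beta>_def)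
  have step: "\<bar>p (Suc n) x - p n x\<bar> \<le> \<beta> n" if x: "x \<in> {a..b}" for n x
  proof -
    have "K0 * L ^ n / fact (Suc n) * (b - x) ^ Suc n \<le> K0 * L ^ n / fact (Suc n) * (b - a) ^ Suc n"
      using x K0 L_nonneg by (intro mult_left_mono power_mono) auto
    thus ?thesis using picard_iter_step_bound[OF K0(2) x, of n]
      by (simp add: \<beta>_def power_mult_distrib mult_ac)
  qed
  have summable: "summable \<beta>"
  proof (rule summable_comparison_test'[of "\<lambda>n. K0 * (b - a) * (inverse (fact n) * (L * (b - a)) ^ n)"])
    show "summable (\<lambda>n. K0 * (b - a) * (inverse (fact n) * (L * (b - a)) ^ n))"
      by (intro summable_mult summable_exp)
    fix n :: nat
    have "\<beta> n \<le> K0 * (b - a) * (L * (b - a)) ^ n / fact n"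
      unfolding \<beta>_def using K0 L_nonneg le by (intro divide_left_mono) (auto intro: fact_mono)
    thus "norm (\<beta> n) \<le> K0 * (b - a) * (inverse (fact n) * (L * (b - a)) ^ n)"
      using \<beta>_nonneg[of n] by (simp add: divide_inverse mult_ac)
  qed
  have telescope: "p n x = y0 + (\<Sum>i<n. p (Suc i) x - p i x)" for n x
    using sum_lessThan_telescope[of "\<lambda>i. p i x" n] by simp
  show ?thesis
  proof
    fix x assume x: "x \<in> {a..b}"
    have "summable (\<lambda>i. p (Suc i) x - p i x)"
      by (rule summable_comparison_test'[OF summable, of 0]) (simp only: real_norm_def step[OF x])
    hence "(\<lambda>n. y0 + (\<Sum>i<n. p (Suc i) x - p i x)) \<longlonglongrightarrow> y0 + (\<Sum>i. p (Suc i) x - p i x)"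
      by (intro tendsto_add tendsto_const summable_LIMSEQ)
    thus "(\<lambda>n. p n x) \<longlonglongrightarrow> y0 + (\<Sum>i. p (Suc i) x - p i x)" by (simp only: telescope[symmetric])
  next
    fix n x assume x: "x \<in> {a..b}"
    have "\<bar>p n x - y0\<bar> \<le> (\<Sum>i<n. \<bar>p (Suc i) x - p i x\<bar>)"
      using telescope[of n x] sum_abs[of "\<lambda>i. p (Suc i) x - p i x" "{..<n}"] by simp
    also have "\<dots> \<le> (\<Sum>i<n. \<beta> i)" by (intro sum_mono step x)
    also have "\<dots> \<le> suminf \<beta>" by (rule sum_le_suminf[OF summable]) (simp_all add: \<beta>_nonneg)
    finally show "\<bar>p n x - y0\<bar> \<le> suminf \<beta>" .
  qed
qed

lemma picard_limit_solves_integral_equation: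
  assumes conv: "\<And>x. x \<in> {a..b} \<Longrightarrow> (\<lambda>n. p n x) \<longlonglongrightarrow> y x"
    and bound: "\<And>n x. x \<in> {a..b} \<Longrightarrow> \<bar>p n x - y0\<bar> \<le> B"
    and x: "x \<in> {a..b}"
  shows "((\<lambda>t. G t (y t)) has_integral (y0 - y x)) {x..b}"
proof -
  obtain K0 where K0: "\<And>t. t \<in> {a..b} \<Longrightarrow> \<bar>G t y0\<bar> \<le> K0"
    using continuous_on_Icc_abs_bounded[OF continuous_superposition[OF continuous_on_const]] by blast
  show ?thesis
  proof (rule has_integral_dominated_convergence[where f="\<lambda>n t. G t (p n t)" and y="\<lambda>n. y0 - p (Suc n) x"
        and h="\<lambda>_. K0 + L * B"])
    show "((\<lambda>t. G t (p n t)) has_integral (y0 - p (Suc n) x)) {x..b}" for n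
      using integrable_integral[OF integrable_picard_iter[OF x, of n]] by simp
    show "\<forall>t\<in>{x..b}. norm (G t (p n t)) \<le> K0 + L * B" for n
    proof
      fix t assume "t \<in> {x..b}"
      hence t: "t \<in> {a..b}" using x by auto
      have "\<bar>G t (p n t)\<bar> \<le> \<bar>G t y0\<bar> + \<bar>G t (p n t) - G t y0\<bar>" by simp
      thus "norm (G t (p n t)) \<le> K0 + L * B"
        using K0[OF t] lipschitz[OF t, of "p n t" y0] mult_left_mono[OF bound[OF t, of n] L_nonneg] by simp
    qed
    show "\<forall>t\<in>{x..b}. (\<lambda>n. G t (p n t)) \<longlonglongrightarrow> G t (y t)"
    proof
      fix t assume "t \<in> {x..b}"
      hence t: "t \<in> {a..b}" using x by auto
      have "(\<lambda>n. G t (p n t) - G t (y t)) \<longlonglongrightarrow> 0"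
      proof (rule Lim_null_comparison)
        show "\<forall>\<^sub>F n in sequentially. norm (G t (p n t) - G t (y t)) \<le> L * \<bar>p n t - y t\<bar>"
          using lipschitz[OF t] by simp
        have "(\<lambda>n. L * \<bar>p n t - y t\<bar>) \<longlonglongrightarrow> L * \<bar>y t - y t\<bar>"
          by (intro tendsto_intros conv t)
        thus "(\<lambda>n. L * \<bar>p n t - y t\<bar>) \<longlonglongrightarrow> 0" by simp
      qed
      thus "(\<lambda>n. G t (p n t)) \<longlonglongrightarrow> G t (y t)" by (simp add: LIM_zero_iff)
    qed
    show "(\<lambda>n. y0 - p (Suc n) x) \<longlonglongrightarrow> y0 - y x"
      by (intro tendsto_intros LIMSEQ_Suc conv x)
  qed auto
qed

lemma backward_integral_equation_solvable:
  "\<exists>y. continuous_on {a..b} y \<and> (\<forall>x\<in>{a..b}. ((\<lambda>t. G t (y t)) has_integral (y0 - y x)) {x..b})"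
proof -
  obtain y B where conv: "\<And>x. x \<in> {a..b} \<Longrightarrow> (\<lambda>n. p n x) \<longlonglongrightarrow> y x"
    and bound: "\<And>n x. x \<in> {a..b} \<Longrightarrow> \<bar>p n x - y0\<bar> \<le> B"
    by (rule picard_iter_converges) blast
  note eq = picard_limit_solves_integral_equation[OF conv bound]
  have "(\<lambda>t. G t (y t)) integrable_on {a..b}" using eq[of a] le by auto
  hence "continuous_on {a..b} (\<lambda>x. y0 - integral {x..b} (\<lambda>t. G t (y t)))"
    by (intro continuous_intros indefinite_integral_continuous_1')
  hence "continuous_on {a..b} y"
    by (rule continuous_on_eq) (use integral_unique[OF eq] in auto)
  thus ?thesis using eq by blast
qed

end

locale zeta_problem =
  fixes Q H :: "real \<Rightarrow> real" and s1 s2 :: real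
  assumes less: "s1 < s2"
    and continuous_Q: "continuous_on {s1..s2} Q" and continuous_H: "continuous_on {s1..s2} H"
    and Q_pos: "\<And>x. s1 < x \<Longrightarrow> x < s2 \<Longrightarrow> Q x > 0"
begin

abbreviation sol where "sol c z \<equiv> zeta_cond Q H s1 s2 c z"

lemma zeta_condD:
  assumes "sol c z"
  shows "continuous_on {s1..s2} z"
    and "\<And>x. s1 < x \<Longrightarrow> x < s2 \<Longrightarrow> (z has_real_derivative (H x - c - Q x / z x)) (at x)"
    and "\<And>x. s1 < x \<Longrightarrow> x < s2 \<Longrightarrow> z x < 0"
    and "z s2 = 0"
  using assms unfolding zeta_cond_def by auto

lemma zeta_cond_nonpos: "sol c z \<Longrightarrow> x \<in> {s1..s2} \<Longrightarrow> z x \<le> 0"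
  using le_on_Icc_if_le_on_open[OF less zeta_condD(1) continuous_on_const, of c z 0 x] zeta_condD(3)
  by fastforce

lemma zeta_cond_cong:
  assumes "sol c z" and eq: "\<And>x. x \<in> {s1..s2} \<Longrightarrow> z' x = z x"
  shows "sol c z'"
  unfolding zeta_cond_def
proof (intro conjI ballI)
  show "continuous_on {s1..s2} z'" using continuous_on_eq[OF zeta_condD(1)[OF assms(1)]] eq by metis
  show "z' s2 = 0" using eq[of s2] zeta_condD(4)[OF assms(1)] less by simp
  fix x assume x: "x \<in> {s1<..<s2}"
  show "z' x < 0" using eq[of x] zeta_condD(3)[OF assms(1)] x by auto
  have "(z has_real_derivative (H x - c - Q x / z x)) (at x)" using zeta_condD(2)[OF assms(1)] x by auto
  hence "(z' has_real_derivative (H x - c - Q x / z x)) (at x)"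
    by (rule has_field_derivative_transform_within_open[of _ _ _ "{s1<..<s2}"]) (use x eq in auto)
  thus "(z' has_real_derivative (H x - c - Q x / z' x)) (at x)" using eq[of x] x by auto
qed

text \<open>Comparison principle: where z > z' we have Q/z \<le> Q/z', so z - z' is nondecreasing
  while positive and would stay positive up to s2, where both vanish.\<close>
lemma zeta_cond_compare:
  assumes z: "sol c z" and z': "sol c' z'" and "c \<le> c'" and x: "x \<in> {s1..s2}"
  shows "z x \<le> z' x"
proof (rule le_on_Icc_if_le_on_open[OF less zeta_condD(1)[OF z] zeta_condD(1)[OF z'] _ x])
  fix x0 assume x0: "s1 < x0" "x0 < s2"
  show "z x0 \<le> z' x0"
  proof (rule ccontr)
    assume "\<not> z x0 \<le> z' x0"
    have "(\<lambda>t. z t - z' t) s2 > 0"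
    proof (rule positive_at_right_end_if_deriv_nonneg_where_pos[where \<phi>="\<lambda>t. z t - z' t" and a=x0])
      show "continuous_on {x0..s2} (\<lambda>t. z t - z' t)"
        using zeta_condD(1)[OF z] zeta_condD(1)[OF z'] x0
        by (intro continuous_intros) (auto intro: continuous_on_subset)
      fix t assume t: "x0 < t" "t < s2" "z t - z' t > 0"
      have t1: "s1 < t" using t x0 by simp
      have neg: "z' t < 0" "z t < 0" using zeta_condD(3)[OF z' t1 t(2)] zeta_condD(3)[OF z t1 t(2)] by auto
      have "Q t / z t \<le> Q t / z' t"
        using neg t(3) Q_pos[OF t1 t(2)] by (intro divide_left_mono) (auto intro: mult_neg_neg)
      hence "(H t - c - Q t / z t) - (H t - c' - Q t / z' t) \<ge> 0" using \<open>c \<le> c'\<close> by simp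
      thus "\<exists>D. ((\<lambda>t. z t - z' t) has_real_derivative D) (at t) \<and> D \<ge> 0"
        using DERIV_diff[OF zeta_condD(2)[OF z t1 t(2)] zeta_condD(2)[OF z' t1 t(2)]] by blast
    qed (use x0 \<open>\<not> z x0 \<le> z' x0\<close> in auto)
    thus False using zeta_condD(4)[OF z] zeta_condD(4)[OF z'] by simp
  qed
qed

lemma zeta_cond_unique: "sol c z \<Longrightarrow> sol c z' \<Longrightarrow> x \<in> {s1..s2} \<Longrightarrow> z x = z' x"
  using zeta_cond_compare[of c z c z' x] zeta_cond_compare[of c z' c z x] by simp

lemma zeta_c_eq:
  assumes z: "sol c z" and x: "x \<in> {s1..s2}"
  shows "zeta_c Q H s1 s2 c x = z x"
proof -
  define z0 where "z0 x = (if x \<in> {s1..s2} then z x else 0)" for x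
  have z0: "sol c z0 \<and> (\<forall>x. x \<notin> {s1..s2} \<longrightarrow> z0 x = 0)"
    using zeta_cond_cong[OF z, of z0] by (auto simp: z0_def)
  have "zeta_c Q H s1 s2 c = z0" unfolding zeta_c_def
  proof (rule the_equality)
    show "sol c z0 \<and> (\<forall>x. x \<notin> {s1..s2} \<longrightarrow> z0 x = 0)" by (rule z0)
    fix w assume w: "sol c w \<and> (\<forall>x. x \<notin> {s1..s2} \<longrightarrow> w x = 0)"
    show "w = z0"
    proof
      fix y show "w y = z0 y"
        using zeta_cond_unique[of c w z0 y] w z0 by (cases "y \<in> {s1..s2}") auto
    qed
  qed
  thus ?thesis using x by (simp add: z0_def)
qed

text \<open>The substitution z = -sqrt(2 W) turns the singular equation for z into an integral
  equation for the energy W; positivity of Q keeps W away from 0 in the interior.\<close>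
lemma zeta_cond_of_energy:
  assumes W_nonneg: "\<And>x. x \<in> {s1..s2} \<Longrightarrow> W x \<ge> 0"
    and W_eq: "\<And>x. x \<in> {s1..s2} \<Longrightarrow> ((\<lambda>t. Q t + (H t - c) * sqrt (2 * W t)) has_integral W x) {x..s2}"
  shows "sol c (\<lambda>x. - sqrt (2 * W x))"
proof -
  define g where "g t = Q t + (H t - c) * sqrt (2 * W t)" for t
  have W_eq': "(g has_integral (0 - (- W x))) {x..s2}" if "x \<in> {s1..s2}" for x
    using W_eq[OF that] unfolding g_def by simp
  have "continuous_on {s1..s2} (\<lambda>x. integral {x..s2} g)"
    using W_eq'[of s1] less by (intro indefinite_integral_continuous_1') auto
  hence cW: "continuous_on {s1..s2} W"
    by (rule continuous_on_eq) (use integral_unique[OF W_eq'] in auto)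
  have cg: "continuous_on {s1..s2} g" unfolding g_def by (intro continuous_intros continuous_Q continuous_H cW)
  have dW: "(W has_real_derivative - g x) (at x)" if x: "s1 < x" "x < s2" for x
    using DERIV_minus[OF has_real_derivative_of_backward_integral_equation[OF cg W_eq' x]] by simp
  have W_pos: "W x > 0" if x: "s1 < x" "x < s2" for x
  proof (rule ccontr)
    assume "\<not> W x > 0"
    hence W0: "W x = 0" using W_nonneg[of x] x by simp
    have "- g x = 0"
    proof (rule DERIV_local_min[OF dW[OF x], of "min (x - s1) (s2 - x)"])
      show "\<forall>y. \<bar>x - y\<bar> < min (x - s1) (s2 - x) \<longrightarrow> W x \<le> W y"
        using W_nonneg W0 by (auto simp: abs_less_iff)
    qed (use x in simp)
    thus False using Q_pos[OF x] W0 by (simp add: g_def)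
  qed
  show ?thesis unfolding zeta_cond_def
  proof (intro conjI ballI)
    show "continuous_on {s1..s2} (\<lambda>x. - sqrt (2 * W x))" by (intro continuous_intros cW)
    show "- sqrt (2 * W s2) = 0" using integral_unique[OF W_eq'[of s2]] less by simp
    fix x assume "x \<in> {s1<..<s2}"
    hence x: "s1 < x" "x < s2" by auto
    show "- sqrt (2 * W x) < 0" using W_pos[OF x] by simp
    have "((\<lambda>x. - sqrt (2 * W x)) has_real_derivative
        - (inverse (sqrt (2 * W x)) / 2 * (2 * - g x))) (at x)"
      using W_pos[OF x] by (intro DERIV_minus DERIV_chain2[OF DERIV_real_sqrt] DERIV_cmult dW x) simp
    moreover have "- (inverse (sqrt (2 * W x)) / 2 * (2 * - g x)) = H x - c - Q x / - sqrt (2 * W x)"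
      using W_pos[OF x] by (simp add: g_def field_simps)
    ultimately show "((\<lambda>x. - sqrt (2 * W x)) has_real_derivative
        (H x - c - Q x / - sqrt (2 * W x))) (at x)" by simp
  qed
qed

end

section \<open>Existence of \<zeta>_c by regularisation\<close>

lemma sqrt_regularized_lipschitz:
  fixes \<delta> u v :: real
  assumes "\<delta> > 0"
  shows "\<bar>sqrt (2 * max u 0 + \<delta>\<^sup>2) - sqrt (2 * max v 0 + \<delta>\<^sup>2)\<bar> \<le> \<bar>u - v\<bar> / \<delta>"
proof -
  define A B where "A = 2 * max u 0 + \<delta>\<^sup>2" and "B = 2 * max v 0 + \<delta>\<^sup>2"
  have A: "\<delta> \<le> sqrt A" "A \<ge> 0" and B: "\<delta> \<le> sqrt B" "B \<ge> 0"
    using real_sqrt_le_mono[of "\<delta>\<^sup>2" A] real_sqrt_le_mono[of "\<delta>\<^sup>2" B] assms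
    by (auto simp: A_def B_def)
  have "\<bar>sqrt A - sqrt B\<bar> * (sqrt A + sqrt B) = \<bar>(sqrt A - sqrt B) * (sqrt A + sqrt B)\<bar>"
    using A B assms by (simp add: abs_mult)
  also have "\<dots> = \<bar>A - B\<bar>" using A B by (simp add: algebra_simps)
  also have "\<dots> = \<bar>2 * (max u 0 - max v 0)\<bar>" unfolding A_def B_def by (rule arg_cong[where f=abs]) simp
  also have "\<dots> = 2 * \<bar>max u 0 - max v 0\<bar>" by (simp only: abs_mult abs_numeral)
  also have "\<dots> \<le> 2 * \<bar>u - v\<bar>" by (simp add: max_def; arith)
  finally have "\<bar>sqrt A - sqrt B\<bar> * (2 * \<delta>) \<le> 2 * \<bar>u - v\<bar>"
    using mult_left_mono[of "2 * \<delta>" "sqrt A + sqrt B" "\<bar>sqrt A - sqrt B\<bar>"] A B by linarith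
  thus ?thesis using assms unfolding A_def B_def by (simp add: le_divide_eq mult_ac)
qed

lemma sqrt_add_square_minus_antimono:
  fixes A d1 d2 :: real
  assumes "A \<ge> 0" "0 \<le> d1" "d1 \<le> d2"
  shows "sqrt (A + d2\<^sup>2) - d2 \<le> sqrt (A + d1\<^sup>2) - d1"
proof -
  define s where "s = sqrt (A + d1\<^sup>2)"
  have s: "s \<ge> d1" "s\<^sup>2 = A + d1\<^sup>2"
    unfolding s_def using real_sqrt_le_mono[of "d1\<^sup>2" "A + d1\<^sup>2"] assms by auto
  have "2 * d1 * (d2 - d1) \<le> 2 * s * (d2 - d1)" using s assms by (intro mult_right_mono) auto
  hence "A + d2\<^sup>2 \<le> (s + (d2 - d1))\<^sup>2" using s by (simp add: power2_eq_square algebra_simps)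
  hence "sqrt (A + d2\<^sup>2) \<le> s + (d2 - d1)"
    using real_sqrt_le_mono s assms by fastforce
  thus ?thesis unfolding s_def by simp
qed

text \<open>A regularisation of the right-hand side of W' = -(Q + (H - c) sqrt(2 W)): the square root is
  replaced by sqrt(2 max W 0 + \<delta>^2), which is Lipschitz in W; subtracting \<delta> where H < c makes the
  regularised right-hand side decrease in \<delta>.\<close>
definition reg_rhs :: "(real \<Rightarrow> real) \<Rightarrow> (real \<Rightarrow> real) \<Rightarrow> real \<Rightarrow> real \<Rightarrow> real \<Rightarrow> real \<Rightarrow> real" where
  "reg_rhs Q H c \<delta> t w =
     - Q t - max (H t - c) 0 * sqrt (2 * max w 0 + \<delta>\<^sup>2)
           + max (c - H t) 0 * (sqrt (2 * max w 0 + \<delta>\<^sup>2) - \<delta>)"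

lemma reg_rhs_lipschitz:
  assumes "\<delta> > 0" "\<bar>H t - c\<bar> \<le> M"
  shows "\<bar>reg_rhs Q H c \<delta> t u - reg_rhs Q H c \<delta> t v\<bar> \<le> M / \<delta> * \<bar>u - v\<bar>"
proof -
  let ?V = "\<lambda>w. sqrt (2 * max w 0 + \<delta>\<^sup>2)"
  have "reg_rhs Q H c \<delta> t u - reg_rhs Q H c \<delta> t v = (c - H t) * (?V u - ?V v)"
    by (cases "H t \<le> c") (simp_all add: reg_rhs_def max_def algebra_simps)
  hence "\<bar>reg_rhs Q H c \<delta> t u - reg_rhs Q H c \<delta> t v\<bar> = \<bar>H t - c\<bar> * \<bar>?V u - ?V v\<bar>"
    by (simp add: abs_mult abs_minus_commute)
  also have "\<dots> \<le> M * (\<bar>u - v\<bar> / \<delta>)"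
    using assms sqrt_regularized_lipschitz[OF assms(1)] by (intro mult_mono) auto
  finally show ?thesis by simp
qed

lemma reg_rhs_antimono:
  assumes "0 < \<delta>1" "\<delta>1 \<le> \<delta>2"
  shows "reg_rhs Q H c \<delta>2 t w \<le> reg_rhs Q H c \<delta>1 t w"
proof -
  have "max (H t - c) 0 * sqrt (2 * max w 0 + \<delta>1\<^sup>2) \<le> max (H t - c) 0 * sqrt (2 * max w 0 + \<delta>2\<^sup>2)"
    using assms by (intro mult_left_mono real_sqrt_le_mono add_left_mono power_mono) auto
  moreover have "max (c - H t) 0 * (sqrt (2 * max w 0 + \<delta>2\<^sup>2) - \<delta>2)
      \<le> max (c - H t) 0 * (sqrt (2 * max w 0 + \<delta>1\<^sup>2) - \<delta>1)"
    using assms sqrt_add_square_minus_antimono[of "2 * max w 0" \<delta>1 \<delta>2] by (intro mult_left_mono) auto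
  ultimately show ?thesis unfolding reg_rhs_def by linarith
qed

lemma reg_rhs_bound:
  assumes "0 < \<delta>" "\<delta> \<le> 1" "0 \<le> w" "w \<le> B" "\<bar>Q t\<bar> \<le> Qb" "\<bar>H t - c\<bar> \<le> M"
  shows "\<bar>reg_rhs Q H c \<delta> t w\<bar> \<le> Qb + M * sqrt (2 * B + 1)"
proof -
  define v where "v = sqrt (2 * max w 0 + \<delta>\<^sup>2)"
  have v: "\<delta> \<le> v" "v \<le> sqrt (2 * B + 1)"
    unfolding v_def using assms real_sqrt_le_mono[of "\<delta>\<^sup>2"] power_le_one[of \<delta> 2]
    by (auto intro!: real_sqrt_le_mono)
  have "\<bar>reg_rhs Q H c \<delta> t w\<bar> \<le> \<bar>Q t\<bar> + \<bar>H t - c\<bar> * v"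
  proof (cases "H t \<le> c")
    case True
    hence "reg_rhs Q H c \<delta> t w = - Q t + (c - H t) * (v - \<delta>)" by (simp add: reg_rhs_def v_def max_def)
    moreover have "0 \<le> (c - H t) * (v - \<delta>)" "(c - H t) * (v - \<delta>) \<le> (c - H t) * v"
      using True v assms by (auto intro: mult_left_mono)
    ultimately show ?thesis using True by (simp add: abs_if)
  next
    case False
    hence "reg_rhs Q H c \<delta> t w = - Q t - (H t - c) * v" by (simp add: reg_rhs_def v_def max_def)
    thus ?thesis using v assms abs_triangle_ineq4[of "- Q t" "(H t - c) * v"] by (simp add: abs_mult)
  qed
  also have "\<dots> \<le> Qb + M * sqrt (2 * B + 1)"
    using assms v by (intro add_mono mult_mono) auto
  finally show ?thesis .
qed

lemma reg_rhs_tendsto: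
  assumes "\<delta> \<longlonglongrightarrow> 0" "w \<longlonglongrightarrow> W" "W \<ge> 0"
  shows "(\<lambda>n. reg_rhs Q H c (\<delta> n) t (w n)) \<longlonglongrightarrow> - (Q t + (H t - c) * sqrt (2 * W))"
proof -
  have lim: "(\<lambda>n. reg_rhs Q H c (\<delta> n) t (w n)) \<longlonglongrightarrow>
     - Q t - max (H t - c) 0 * sqrt (2 * max W 0 + 0\<^sup>2) + max (c - H t) 0 * (sqrt (2 * max W 0 + 0\<^sup>2) - 0)"
    unfolding reg_rhs_def by (intro tendsto_intros assms)
  have E: "- Q t - max (H t - c) 0 * sqrt (2 * max W 0 + 0\<^sup>2) + max (c - H t) 0 * (sqrt (2 * max W 0 + 0\<^sup>2) - 0)
      = - (Q t + (H t - c) * sqrt (2 * W))"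
    using assms(3) by (cases "H t \<le> c") (simp_all add: max_def algebra_simps)
  show ?thesis using lim[unfolded E] .
qed

context zeta_problem
begin

definition reg_sol :: "real \<Rightarrow> real \<Rightarrow> (real \<Rightarrow> real) \<Rightarrow> bool" where
  "reg_sol c \<delta> w \<longleftrightarrow> continuous_on {s1..s2} w \<and>
     (\<forall>x\<in>{s1..s2}. ((\<lambda>t. reg_rhs Q H c \<delta> t (w t)) has_integral (0 - w x)) {x..s2})"

lemma reg_sol_exists:
  assumes "\<delta> > 0"
  shows "\<exists>w. reg_sol c \<delta> w"
proof -
  obtain M where M: "M \<ge> 0" "\<And>t. t \<in> {s1..s2} \<Longrightarrow> \<bar>H t - c\<bar> \<le> M"
    using continuous_on_Icc_abs_bounded[OF continuous_on_diff[OF continuous_H continuous_on_const]] by blast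
  interpret backward_lipschitz_ode "reg_rhs Q H c \<delta>" s1 s2 "M / \<delta>" 0
  proof
    show "s1 \<le> s2" "0 \<le> M / \<delta>" using less M(1) assms by auto
    show "\<bar>reg_rhs Q H c \<delta> t u - reg_rhs Q H c \<delta> t v\<bar> \<le> M / \<delta> * \<bar>u - v\<bar>" if "t \<in> {s1..s2}" for t u v
      using reg_rhs_lipschitz[of \<delta> H t c M Q u v] assms M(2)[OF that] by blast
    show "continuous_on {s1..s2} (\<lambda>t. reg_rhs Q H c \<delta> t (p t))" if "continuous_on {s1..s2} p" for p
      unfolding reg_rhs_def by (intro continuous_intros continuous_Q continuous_H that)
  qed
  show ?thesis using backward_integral_equation_solvable unfolding reg_sol_def by blast
qed

lemma reg_solD:
  assumes "reg_sol c \<delta> w"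
  shows "continuous_on {s1..s2} w" "w s2 = 0"
    and "\<And>x. s1 < x \<Longrightarrow> x < s2 \<Longrightarrow> (w has_real_derivative reg_rhs Q H c \<delta> x (w x)) (at x)"
proof -
  show cw: "continuous_on {s1..s2} w" using assms by (simp add: reg_sol_def)
  have eq: "\<And>x. x \<in> {s1..s2} \<Longrightarrow> ((\<lambda>t. reg_rhs Q H c \<delta> t (w t)) has_integral (0 - w x)) {x..s2}"
    using assms by (simp add: reg_sol_def)
  show "w s2 = 0" using integral_unique[OF eq[of s2]] less by simp
  show "(w has_real_derivative reg_rhs Q H c \<delta> x (w x)) (at x)" if "s1 < x" "x < s2" for x
  proof (rule has_real_derivative_of_backward_integral_equation[OF _ eq that])
    show "continuous_on {s1..s2} (\<lambda>t. reg_rhs Q H c \<delta> t (w t))"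
      unfolding reg_rhs_def by (intro continuous_intros continuous_Q continuous_H cw)
  qed
qed

lemma reg_sol_nonneg:
  assumes w: "reg_sol c \<delta> w" and "\<delta> > 0" and x: "x \<in> {s1..s2}"
  shows "w x \<ge> 0"
proof (rule ccontr)
  assume "\<not> w x \<ge> 0"
  have "(\<lambda>t. - w t) s2 > 0"
  proof (rule positive_at_right_end_if_deriv_nonneg_where_pos[where \<phi>="\<lambda>t. - w t" and a=x])
    show "continuous_on {x..s2} (\<lambda>t. - w t)"
      using reg_solD(1)[OF w] x by (intro continuous_intros) (auto intro: continuous_on_subset)
    fix t assume t: "x < t" "t < s2" "- w t > 0"
    have t1: "s1 < t" using t x by simp
    have "- reg_rhs Q H c \<delta> t (w t) = Q t + max (H t - c) 0 * \<delta>"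
      using t(3) \<open>\<delta> > 0\<close> by (simp add: reg_rhs_def max_def)
    hence "- reg_rhs Q H c \<delta> t (w t) \<ge> 0" using Q_pos[OF t1 t(2)] \<open>\<delta> > 0\<close> by simp
    thus "\<exists>D. ((\<lambda>t. - w t) has_real_derivative D) (at t) \<and> D \<ge> 0"
      using DERIV_minus[OF reg_solD(3)[OF w t1 t(2)]] by blast
  qed (use x \<open>\<not> w x \<ge> 0\<close> in auto)
  thus False using reg_solD(2)[OF w] by simp
qed

text \<open>The difference of the two solutions is weighted by exp(L t), L the Lipschitz constant, to
  absorb the Lipschitz error term in the comparison argument.\<close>
lemma reg_sol_mono:
  assumes w1: "reg_sol c \<delta>1 w1" and w2: "reg_sol c \<delta>2 w2" and \<delta>: "0 < \<delta>1" "\<delta>1 \<le> \<delta>2"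
    and x: "x \<in> {s1..s2}"
  shows "w1 x \<le> w2 x"
proof (rule ccontr)
  assume gt: "\<not> w1 x \<le> w2 x"
  obtain M where M: "M \<ge> 0" "\<And>t. t \<in> {s1..s2} \<Longrightarrow> \<bar>H t - c\<bar> \<le> M"
    using continuous_on_Icc_abs_bounded[OF continuous_on_diff[OF continuous_H continuous_on_const]] by blast
  define L where "L = M / \<delta>1"
  define \<phi> where "\<phi> t = (w1 t - w2 t) * exp (L * t)" for t
  have "\<phi> s2 > 0"
  proof (rule positive_at_right_end_if_deriv_nonneg_where_pos[where \<phi>=\<phi> and a=x])
    show "continuous_on {x..s2} \<phi>"
      unfolding \<phi>_def using reg_solD(1)[OF w1] reg_solD(1)[OF w2] x
      by (intro continuous_intros) (auto intro: continuous_on_subset)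
    fix t assume t: "x < t" "t < s2" "\<phi> t > 0"
    have t1: "s1 < t" and tt: "t \<in> {s1..s2}" using t x by auto
    have pos: "w1 t - w2 t > 0" using t(3) by (simp add: \<phi>_def zero_less_mult_iff)
    have "reg_rhs Q H c \<delta>2 t (w2 t) \<le> reg_rhs Q H c \<delta>1 t (w2 t)" by (rule reg_rhs_antimono[OF \<delta>])
    moreover have "\<bar>reg_rhs Q H c \<delta>1 t (w1 t) - reg_rhs Q H c \<delta>1 t (w2 t)\<bar> \<le> L * \<bar>w1 t - w2 t\<bar>"
      unfolding L_def using reg_rhs_lipschitz[of \<delta>1 H t c M Q] \<delta>(1) M(2)[OF tt] by blast
    ultimately have "0 \<le> reg_rhs Q H c \<delta>1 t (w1 t) - reg_rhs Q H c \<delta>2 t (w2 t) + L * (w1 t - w2 t)"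
      using pos by (simp add: abs_if split: if_splits)
    hence "0 \<le> exp (L * t) * (reg_rhs Q H c \<delta>1 t (w1 t) - reg_rhs Q H c \<delta>2 t (w2 t) + L * (w1 t - w2 t))"
      by simp
    hence "0 \<le> (reg_rhs Q H c \<delta>1 t (w1 t) - reg_rhs Q H c \<delta>2 t (w2 t)) * exp (L * t)
        + exp (L * t) * L * (w1 t - w2 t)"
      by (simp add: algebra_simps)
    moreover have "(\<phi> has_real_derivative (reg_rhs Q H c \<delta>1 t (w1 t) - reg_rhs Q H c \<delta>2 t (w2 t)) * exp (L * t)
        + exp (L * t) * L * (w1 t - w2 t)) (at t)"
    proof -
      have "((\<lambda>t. exp (L * t)) has_real_derivative exp (L * t) * L) (at t)"
        by (rule derivative_eq_intros refl | simp)+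
      thus ?thesis unfolding \<phi>_def
        by (rule DERIV_mult[OF DERIV_diff[OF reg_solD(3)[OF w1 t1 t(2)] reg_solD(3)[OF w2 t1 t(2)]]])
    qed
    ultimately show "\<exists>D. (\<phi> has_real_derivative D) (at t) \<and> D \<ge> 0" by blast
  qed (use x gt in \<open>auto simp: \<phi>_def\<close>)
  thus False using reg_solD(2)[OF w1] reg_solD(2)[OF w2] by (simp add: \<phi>_def)
qed

end

context zeta_problem
begin

lemma energy_equation_of_reg_sol_limit:
  assumes \<delta>: "\<And>n. 0 < \<delta> n" "\<And>n. \<delta> n \<le> 1" "\<delta> \<longlonglongrightarrow> 0"
    and w: "\<And>n. reg_sol c (\<delta> n) (w n)" and w_bound: "\<And>n x. x \<in> {s1..s2} \<Longrightarrow> w n x \<le> B"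
    and W_lim: "\<And>x. x \<in> {s1..s2} \<Longrightarrow> (\<lambda>n. w n x) \<longlonglongrightarrow> W x"
    and x: "x \<in> {s1..s2}"
  shows "((\<lambda>t. Q t + (H t - c) * sqrt (2 * W t)) has_integral W x) {x..s2}"
proof -
  have w_nonneg: "w n t \<ge> 0" if "t \<in> {s1..s2}" for n t by (rule reg_sol_nonneg[OF w \<delta>(1) that])
  have W_nonneg: "W t \<ge> 0" if "t \<in> {s1..s2}" for t
    using LIMSEQ_le_const[OF W_lim[OF that], of 0] w_nonneg that by auto
  obtain M where M: "M \<ge> 0" "\<And>t. t \<in> {s1..s2} \<Longrightarrow> \<bar>H t - c\<bar> \<le> M"
    using continuous_on_Icc_abs_bounded[OF continuous_on_diff[OF continuous_H continuous_on_const]] by blast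
  obtain Qb where Qb: "\<And>t. t \<in> {s1..s2} \<Longrightarrow> \<bar>Q t\<bar> \<le> Qb"
    using continuous_on_Icc_abs_bounded[OF continuous_Q] by blast
  show ?thesis
  proof (rule has_integral_dominated_convergence[where f="\<lambda>n t. - reg_rhs Q H c (\<delta> n) t (w n t)"
        and y="\<lambda>n. w n x" and h="\<lambda>_. Qb + M * sqrt (2 * B + 1)"])
    show "((\<lambda>t. - reg_rhs Q H c (\<delta> n) t (w n t)) has_integral w n x) {x..s2}" for n
      using has_integral_neg[of _ "0 - w n x"] w[of n] x by (force simp: reg_sol_def)
    show "\<forall>t\<in>{x..s2}. norm (- reg_rhs Q H c (\<delta> n) t (w n t)) \<le> Qb + M * sqrt (2 * B + 1)" for n
    proof
      fix t assume "t \<in> {x..s2}"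
      hence t: "t \<in> {s1..s2}" using x by auto
      show "norm (- reg_rhs Q H c (\<delta> n) t (w n t)) \<le> Qb + M * sqrt (2 * B + 1)"
        using reg_rhs_bound[of "\<delta> n" "w n t" B Q t Qb H c M] \<delta> w_nonneg[OF t] w_bound[OF t] Qb[OF t] M(2)[OF t]
        by simp
    qed
    show "\<forall>t\<in>{x..s2}. (\<lambda>n. - reg_rhs Q H c (\<delta> n) t (w n t)) \<longlonglongrightarrow> Q t + (H t - c) * sqrt (2 * W t)"
    proof
      fix t assume "t \<in> {x..s2}"
      hence t: "t \<in> {s1..s2}" using x by auto
      show "(\<lambda>n. - reg_rhs Q H c (\<delta> n) t (w n t)) \<longlonglongrightarrow> Q t + (H t - c) * sqrt (2 * W t)"
        using tendsto_minus[OF reg_rhs_tendsto[OF \<delta>(3) W_lim[OF t] W_nonneg[OF t], of Q H c t]] by (simp only: minus_minus)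
    qed
  qed (use W_lim x in auto)
qed

lemma zeta_cond_exists: "\<exists>z. sol c z"
proof -
  define \<delta> where "\<delta> n = inverse (real (Suc n))" for n
  have \<delta>: "\<delta> n > 0" "\<delta> n \<le> 1" for n by (simp_all add: \<delta>_def inverse_le_1_iff)
  have \<delta>_antimono: "\<delta> m \<le> \<delta> n" if "n \<le> m" for n m using that by (simp add: \<delta>_def le_imp_inverse_le)
  have \<delta>_lim: "\<delta> \<longlonglongrightarrow> 0" unfolding \<delta>_def by (rule LIMSEQ_inverse_real_of_nat)
  define w where "w n = (SOME w. reg_sol c (\<delta> n) w)" for n
  have w: "reg_sol c (\<delta> n) (w n)" for n
    unfolding w_def using someI_ex[OF reg_sol_exists[OF \<delta>(1)]] .
  have w_nonneg: "w n x \<ge> 0" if "x \<in> {s1..s2}" for n x by (rule reg_sol_nonneg[OF w \<delta>(1) that])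
  have w_antimono: "w m x \<le> w n x" if "n \<le> m" "x \<in> {s1..s2}" for n m x
    by (rule reg_sol_mono[OF w w \<delta>(1) \<delta>_antimono[OF that(1)] that(2)])
  obtain B where B: "\<And>t. t \<in> {s1..s2} \<Longrightarrow> \<bar>w 0 t\<bar> \<le> B"
    using continuous_on_Icc_abs_bounded[OF reg_solD(1)[OF w]] by blast
  have w_bound: "w n x \<le> B" if "x \<in> {s1..s2}" for n x
    using w_antimono[of 0 n x] B[of x] that by simp
  define W where "W x = lim (\<lambda>n. w n x)" for x
  have W_lim: "(\<lambda>n. w n x) \<longlonglongrightarrow> W x" if x: "x \<in> {s1..s2}" for x
  proof -
    have "decseq (\<lambda>n. w n x)" unfolding decseq_def using w_antimono x by auto
    then obtain l where "(\<lambda>n. w n x) \<longlonglongrightarrow> l" by (rule decseq_convergent) (use w_nonneg x in blast)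
    thus ?thesis by (simp add: W_def limI)
  qed
  have W_nonneg: "W x \<ge> 0" if "x \<in> {s1..s2}" for x
    using LIMSEQ_le_const[OF W_lim[OF that], of 0] w_nonneg that by auto
  have W_eq: "((\<lambda>t. Q t + (H t - c) * sqrt (2 * W t)) has_integral W x) {x..s2}" if "x \<in> {s1..s2}" for x
    by (rule energy_equation_of_reg_sol_limit[OF \<delta> \<delta>_lim w w_bound W_lim that])
  show ?thesis using zeta_cond_of_energy[OF W_nonneg W_eq] by blast
qed

lemma sol_zeta_c: "sol c (zeta_c Q H s1 s2 c)"
proof -
  obtain z where z: "sol c z" using zeta_cond_exists by blast
  show ?thesis by (rule zeta_cond_cong[OF z]) (rule zeta_c_eq[OF z])
qed

abbreviation zeta where "zeta c \<equiv> zeta_c Q H s1 s2 c"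

lemma zeta_mono: "c \<le> c' \<Longrightarrow> x \<in> {s1..s2} \<Longrightarrow> zeta c x \<le> zeta c' x"
  by (rule zeta_cond_compare[OF sol_zeta_c sol_zeta_c])

end

section \<open>Dependence of \<zeta>_c on the speed\<close>

lemma isCont_mono_if_tendsto_from_both_sides:
  fixes f :: "real \<Rightarrow> real"
  assumes mono: "mono f" and e: "\<And>n. e n > 0"
    and right: "(\<lambda>n. f (c + e n)) \<longlonglongrightarrow> f c" and left: "(\<lambda>n. f (c - e n)) \<longlonglongrightarrow> f c"
  shows "isCont f c"
  unfolding isCont_def LIM_eq
proof (intro allI impI)
  fix r :: real assume "r > 0"
  obtain N1 where N1: "\<bar>f (c + e N1) - f c\<bar> < r"
    using LIMSEQ_D[OF right \<open>r > 0\<close>] by (metis order_refl real_norm_def)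
  obtain N2 where N2: "\<bar>f (c - e N2) - f c\<bar> < r"
    using LIMSEQ_D[OF left \<open>r > 0\<close>] by (metis order_refl real_norm_def)
  show "\<exists>s>0. \<forall>x. x \<noteq> c \<and> norm (x - c) < s \<longrightarrow> norm (f x - f c) < r"
  proof (intro exI[of _ "min (e N1) (e N2)"] conjI allI impI)
    fix x assume "x \<noteq> c \<and> norm (x - c) < min (e N1) (e N2)"
    hence "c - e N2 \<le> x" "x \<le> c + e N1" by (auto simp: abs_less_iff)
    hence "f (c - e N2) \<le> f x" "f x \<le> f (c + e N1)" by (simp_all add: monoD[OF mono])
    moreover have "f (c - e N2) \<le> f c" "f c \<le> f (c + e N1)"
      using e[of N1] e[of N2] by (simp_all add: monoD[OF mono])
    ultimately show "norm (f x - f c) < r" using N1 N2 by (simp add: abs_less_iff)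
  qed (use e in simp)
qed

context zeta_problem
begin

text \<open>If the two values agreed at s1, then near s1 the difference zeta c - zeta c' would have
  derivative close to c' - c > 0, contradicting zeta c \<le> zeta c'.\<close>
lemma zeta_left_strict_mono:
  assumes "c < c'" and neg: "zeta c s1 < 0"
  shows "zeta c s1 < zeta c' s1"
proof (rule ccontr)
  assume "\<not> zeta c s1 < zeta c' s1"
  hence eq: "zeta c s1 = zeta c' s1" using zeta_mono[of c c' s1] assms less by simp
  define m where "m = (s1 + s2) / 2"
  have m: "s1 < m" "m < s2" using less by (auto simp: m_def)
  have neg_near: "zeta c t \<noteq> 0 \<and> zeta c' t \<noteq> 0" if "t \<in> {s1..m}" for t
  proof (cases "t = s1")
    case False
    thus ?thesis using that m by (intro conjI less_imp_neq zeta_condD(3)[OF sol_zeta_c]) auto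
  qed (use neg eq in simp)
  define E where "E t = (c' - c) - Q t / zeta c t + Q t / zeta c' t" for t
  have "{s1..m} \<subseteq> {s1..s2}" using m by auto
  hence "continuous_on {s1..m} E" unfolding E_def
    using continuous_on_subset[OF zeta_condD(1)[OF sol_zeta_c]] continuous_on_subset[OF continuous_Q]
    by (intro continuous_intros) (auto dest: neg_near)
  moreover have "E s1 > 0" using eq \<open>c < c'\<close> by (simp add: E_def)
  ultimately obtain d where d: "d > 0" "\<forall>y\<in>{s1..m}. dist y s1 < d \<longrightarrow> dist (E y) (E s1) < E s1"
    using continuous_on_iff[THEN iffD1, rule_format, of _ _ s1 "E s1"] m by fastforce
  define b where "b = min m (s1 + d / 2)"
  have b: "s1 < b" "b \<le> m" using m d by (auto simp: b_def)
  have "zeta c s1 - zeta c' s1 < zeta c b - zeta c' b"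
  proof (rule DERIV_pos_imp_increasing_open[OF b(1), where f="\<lambda>t. zeta c t - zeta c' t"])
    have "{s1..b} \<subseteq> {s1..s2}" using b m by auto
    thus "continuous_on {s1..b} (\<lambda>t. zeta c t - zeta c' t)"
      using continuous_on_subset[OF zeta_condD(1)[OF sol_zeta_c]] by (intro continuous_on_diff)
    fix t assume t: "s1 < t" "t < b"
    have "((\<lambda>t. zeta c t - zeta c' t) has_real_derivative
        (H t - c - Q t / zeta c t) - (H t - c' - Q t / zeta c' t)) (at t)"
      using t b m by (intro DERIV_diff zeta_condD(2)[OF sol_zeta_c]) auto
    moreover have "(H t - c - Q t / zeta c t) - (H t - c' - Q t / zeta c' t) = E t" by (simp add: E_def)
    moreover have "E t > 0" using d(2)[rule_format, of t] t b
      by (auto simp: dist_real_def b_def abs_less_iff)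
    ultimately show "\<exists>y. ((\<lambda>t. zeta c t - zeta c' t) has_real_derivative y) (at t) \<and> y > 0" by auto
  qed
  moreover have "zeta c b \<le> zeta c' b" using zeta_mono[of c c' b] \<open>c < c'\<close> b m by simp
  ultimately show False using eq by simp
qed

lemma zeta_cond_energy:
  assumes z: "sol c z" and x: "x \<in> {s1..s2}"
  shows "((\<lambda>t. Q t - z t * (H t - c)) has_integral z x * z x / 2) {x..s2}"
proof -
  have "((\<lambda>t. z t * (H t - c) - Q t) has_integral (z s2 * z s2 / 2 - z x * z x / 2)) {x..s2}"
  proof (rule fundamental_theorem_of_calculus_interior)
    show "continuous_on {x..s2} (\<lambda>t. z t * z t / 2)"
      using zeta_condD(1)[OF z] x by (intro continuous_intros) (auto intro: continuous_on_subset)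
    fix t assume "t \<in> {x<..<s2}"
    hence t: "s1 < t" "t < s2" using x by auto
    have "((\<lambda>t. z t * z t / 2) has_real_derivative
        ((H t - c - Q t / z t) * z t + (H t - c - Q t / z t) * z t) / 2) (at t)"
      by (intro DERIV_cdivide DERIV_mult zeta_condD(2)[OF z t])
    moreover have "((H t - c - Q t / z t) * z t + (H t - c - Q t / z t) * z t) / 2 = z t * (H t - c) - Q t"
      using zeta_condD(3)[OF z t] by (simp add: field_simps)
    ultimately show "((\<lambda>t. z t * z t / 2) has_vector_derivative (z t * (H t - c) - Q t)) (at t)"
      using has_real_derivative_iff_has_vector_derivative by metis
  qed (use x in simp)
  from has_integral_neg[OF this] show ?thesis using zeta_condD(4)[OF z] by simp
qed

text \<open>The energy identity of the solutions passes to the limit by dominated convergence.\<close>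
lemma zeta_cond_limit:
  assumes c: "cs \<longlonglongrightarrow> c" "\<And>n. \<bar>cs n - c\<bar> \<le> 1" and z: "\<And>n. sol (cs n) (zs n)"
    and lim: "\<And>x. x \<in> {s1..s2} \<Longrightarrow> (\<lambda>n. zs n x) \<longlonglongrightarrow> \<psi> x"
    and bound: "\<And>n x. x \<in> {s1..s2} \<Longrightarrow> \<bar>zs n x\<bar> \<le> B"
  shows "sol c \<psi>"
proof -
  obtain M where M: "\<And>t. t \<in> {s1..s2} \<Longrightarrow> \<bar>H t - c\<bar> \<le> M"
    using continuous_on_Icc_abs_bounded[OF continuous_on_diff[OF continuous_H continuous_on_const]] by blast
  obtain Qb where Qb: "\<And>t. t \<in> {s1..s2} \<Longrightarrow> \<bar>Q t\<bar> \<le> Qb"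
    using continuous_on_Icc_abs_bounded[OF continuous_Q] by blast
  have \<psi>_nonpos: "\<psi> x \<le> 0" if "x \<in> {s1..s2}" for x
    using LIMSEQ_le_const2[OF lim[OF that], of 0] zeta_cond_nonpos[OF z that] by auto
  define W where "W x = \<psi> x * \<psi> x / 2" for x
  have sqrt_W: "sqrt (2 * W x) = - \<psi> x" if "x \<in> {s1..s2}" for x
    using \<psi>_nonpos[OF that] real_sqrt_abs[of "\<psi> x"] by (simp add: W_def power2_eq_square)
  have W_eq: "((\<lambda>t. Q t + (H t - c) * sqrt (2 * W t)) has_integral W x) {x..s2}" if x: "x \<in> {s1..s2}" for x
  proof (rule has_integral_spike_finite[of "{}", OF _ _ has_integral_dominated_convergence[
          where f="\<lambda>n t. Q t - zs n t * (H t - cs n)" and y="\<lambda>n. zs n x * zs n x / 2"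
          and h="\<lambda>_. Qb + B * (M + 1)"]])
    show "((\<lambda>t. Q t - zs n t * (H t - cs n)) has_integral zs n x * zs n x / 2) {x..s2}" for n
      by (rule zeta_cond_energy[OF z x])
    show "\<forall>t\<in>{x..s2}. norm (Q t - zs n t * (H t - cs n)) \<le> Qb + B * (M + 1)" for n
    proof
      fix t assume "t \<in> {x..s2}"
      hence t: "t \<in> {s1..s2}" using x by auto
      have "\<bar>H t - cs n\<bar> \<le> M + 1" using M[OF t] c(2)[of n] by arith
      hence "\<bar>zs n t * (H t - cs n)\<bar> \<le> B * (M + 1)"
        unfolding abs_mult using bound[OF t] by (intro mult_mono) (auto intro: order_trans[OF abs_ge_zero])
      thus "norm (Q t - zs n t * (H t - cs n)) \<le> Qb + B * (M + 1)"
        using Qb[OF t] abs_triangle_ineq4[of "Q t" "zs n t * (H t - cs n)"] by simp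
    qed
    show "\<forall>t\<in>{x..s2}. (\<lambda>n. Q t - zs n t * (H t - cs n)) \<longlonglongrightarrow> Q t - \<psi> t * (H t - c)"
      using x by (intro ballI tendsto_intros c(1) lim) auto
    show "(\<lambda>n. zs n x * zs n x / 2) \<longlonglongrightarrow> W x"
      unfolding W_def by (intro tendsto_intros lim x) simp
    show "Q t + (H t - c) * sqrt (2 * W t) = Q t - \<psi> t * (H t - c)" if "t \<in> {x..s2} - {}" for t
      using sqrt_W[of t] that x by (simp add: algebra_simps)
  qed auto
  have "sol c (\<lambda>x. - sqrt (2 * W x))" by (rule zeta_cond_of_energy[OF _ W_eq]) (simp add: W_def)
  thus ?thesis by (rule zeta_cond_cong) (simp add: sqrt_W)
qed

lemma tendsto_zeta_monoseq:
  assumes "monoseq cs" "cs \<longlonglongrightarrow> c" "\<And>n. \<bar>cs n - c\<bar> \<le> 1" and x: "x \<in> {s1..s2}"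
  shows "(\<lambda>n. zeta (cs n) x) \<longlonglongrightarrow> zeta c x"
proof -
  obtain B where B: "\<And>t. t \<in> {s1..s2} \<Longrightarrow> \<bar>zeta (c - 1) t\<bar> \<le> B"
    using continuous_on_Icc_abs_bounded[OF zeta_condD(1)[OF sol_zeta_c]] by blast
  have bound: "\<bar>zeta (cs n) t\<bar> \<le> B" if t: "t \<in> {s1..s2}" for n t
    using zeta_mono[OF _ t, of "c - 1" "cs n"] zeta_cond_nonpos[OF sol_zeta_c t, of "cs n"] B[OF t]
      assms(3)[of n] by (simp add: abs_le_iff)
  have conv: "(\<lambda>n. zeta (cs n) t) \<longlonglongrightarrow> lim (\<lambda>n. zeta (cs n) t)" if t: "t \<in> {s1..s2}" for t
  proof -
    have "Bseq (\<lambda>n. zeta (cs n) t)" by (rule BseqI'[of _ B]) (use bound[OF t] in simp)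
    moreover have "monoseq (\<lambda>n. zeta (cs n) t)"
      using assms(1) zeta_mono[OF _ t] unfolding monoseq_def by blast
    ultimately show ?thesis using Bseq_monoseq_convergent convergent_LIMSEQ_iff by blast
  qed
  have "sol c (\<lambda>t. lim (\<lambda>n. zeta (cs n) t))"
    by (rule zeta_cond_limit[OF assms(2,3) sol_zeta_c conv bound])
  thus ?thesis using conv[OF x] zeta_c_eq[OF _ x] by simp
qed

lemma isCont_zeta_left: "isCont (\<lambda>c. zeta c s1) c"
proof -
  define e :: "nat \<Rightarrow> real" where "e n = inverse (real (Suc n))" for n
  have e: "e n > 0" "e n \<le> 1" for n by (simp_all add: e_def inverse_le_1_iff)
  have e_lim: "e \<longlonglongrightarrow> 0" unfolding e_def by (rule LIMSEQ_inverse_real_of_nat)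
  have lim: "(\<lambda>n. c + e n) \<longlonglongrightarrow> c" "(\<lambda>n. c - e n) \<longlonglongrightarrow> c"
    using tendsto_add[OF tendsto_const e_lim] tendsto_diff[OF tendsto_const e_lim] by simp_all
  have "decseq e" unfolding e_def decseq_def by (auto intro: le_imp_inverse_le)
  hence mono: "monoseq (\<lambda>n. c + e n)" "monoseq (\<lambda>n. c - e n)" unfolding monoseq_def decseq_def by auto
  have close: "\<bar>c + e n - c\<bar> \<le> 1" "\<bar>c - e n - c\<bar> \<le> 1" for n using e[of n] by auto
  have s1: "s1 \<in> {s1..s2}" using less by simp
  show ?thesis
  proof (rule isCont_mono_if_tendsto_from_both_sides[OF _ e(1)])
    show "mono (\<lambda>c. zeta c s1)" using zeta_mono[OF _ s1] by (auto intro: monoI)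
    show "(\<lambda>n. zeta (c + e n) s1) \<longlonglongrightarrow> zeta c s1"
      by (rule tendsto_zeta_monoseq[OF mono(1) lim(1) close(1) s1])
    show "(\<lambda>n. zeta (c - e n) s1) \<longlonglongrightarrow> zeta c s1"
      by (rule tendsto_zeta_monoseq[OF mono(2) lim(2) close(2) s1])
  qed
qed

lemma zeta_left_linear_bound: "\<exists>K. \<forall>c. zeta c s1 \<le> (s2 - s1) * (K + c)"
proof -
  obtain Hb where Hb: "\<And>t. t \<in> {s1..s2} \<Longrightarrow> \<bar>H t\<bar> \<le> Hb"
    using continuous_on_Icc_abs_bounded[OF continuous_H] by blast
  have "zeta c s1 \<le> (s2 - s1) * (Hb + c)" for c
  proof -
    obtain l \<xi> where \<xi>: "s1 < \<xi>" "\<xi> < s2" "(zeta c has_real_derivative l) (at \<xi>)"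
      and mvt: "zeta c s2 - zeta c s1 = (s2 - s1) * l"
      using MVT[OF less zeta_condD(1)[OF sol_zeta_c]] zeta_condD(2)[OF sol_zeta_c]
      unfolding real_differentiable_def by metis
    have "l = H \<xi> - c - Q \<xi> / zeta c \<xi>"
      using DERIV_unique[OF \<xi>(3) zeta_condD(2)[OF sol_zeta_c \<xi>(1,2)]] .
    moreover have "Q \<xi> / zeta c \<xi> < 0"
      using Q_pos[OF \<xi>(1,2)] zeta_condD(3)[OF sol_zeta_c \<xi>(1,2)] by (simp add: divide_pos_neg)
    moreover have "H \<xi> \<ge> - Hb" using Hb[of \<xi>] \<xi>(1,2) by auto
    ultimately have "(s2 - s1) * (- Hb - c) \<le> (s2 - s1) * l" using less by (intro mult_left_mono) auto
    thus ?thesis using mvt zeta_condD(4)[OF sol_zeta_c] by (simp add: algebra_simps)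
  qed
  thus ?thesis by blast
qed

lemma zeta_left_neg_iff: "zeta c s1 < 0 \<longleftrightarrow> ereal c < cstar Q H s1 s2"
proof
  assume "zeta c s1 < 0"
  then obtain r where r: "r > 0" "\<And>x. x \<noteq> c \<and> \<bar>c - x\<bar> < r \<Longrightarrow> zeta x s1 < 0"
    using LIM_fun_less_zero[OF isCont_zeta_left[unfolded isCont_def]] by blast
  have "ereal (c + r / 2) \<le> cstar Q H s1 s2"
    unfolding cstar_def using r by (intro Sup_upper) auto
  moreover have "ereal c < ereal (c + r / 2)" using r by simp
  ultimately show "ereal c < cstar Q H s1 s2" by (rule order.strict_trans2[rotated])
next
  assume "ereal c < cstar Q H s1 s2"
  then obtain c' where "zeta c' s1 < 0" "c < c'"
    unfolding cstar_def less_Sup_iff by auto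
  thus "zeta c s1 < 0" using zeta_mono[of c c' s1] less by simp
qed

end

section \<open>Splitting the boundary value problem at \<gamma>\<close>

lemma has_real_derivative_reflect:
  assumes "(f has_real_derivative D) (at (s - x))"
  shows "((\<lambda>x. f (s - x)) has_real_derivative - D) (at x)"
proof -
  have "((\<lambda>x. s - x) has_real_derivative - 1) (at x)" by (rule derivative_eq_intros refl | simp)+
  from DERIV_chain2[OF assms this] show ?thesis by simp
qed

lemma exists_crossing:
  fixes a b :: "real \<Rightarrow> real"
  assumes "\<And>c. isCont a c" "\<And>c. isCont b c" "mono a" "antimono b" "A > 0" "B > 0"
    and a_le: "\<And>c. a c \<le> A * (Ka + c)" and b_le: "\<And>c. b c \<le> B * (Kb - c)"
  shows "\<exists>c. a c = b c"
proof -
  define l where "l = min 0 (b 0 / A - Ka)"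
  define r where "r = max 0 (Kb - a 0 / B)"
  have "a l \<le> A * (Ka + l)" by (rule a_le)
  also have "\<dots> \<le> A * (b 0 / A)" using \<open>A > 0\<close> by (intro mult_left_mono) (auto simp: l_def)
  also have "\<dots> \<le> b l" using \<open>A > 0\<close> \<open>antimono b\<close> by (simp add: l_def antimonoD)
  finally have "a l - b l \<le> 0" by simp
  have "b r \<le> B * (Kb - r)" by (rule b_le)
  also have "\<dots> \<le> B * (a 0 / B)" using \<open>B > 0\<close> by (intro mult_left_mono) (auto simp: r_def)
  also have "\<dots> \<le> a r" using \<open>B > 0\<close> \<open>mono a\<close> by (simp add: r_def monoD)
  finally have "0 \<le> a r - b r" by simp
  note \<open>a l - b l \<le> 0\<close> this
  moreover have "l \<le> r" by (simp add: l_def r_def)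
  moreover have "continuous_on {l..r} (\<lambda>c. a c - b c)"
    using assms(1,2) by (intro continuous_at_imp_continuous_on ballI isCont_diff)
  ultimately obtain c where "a c - b c = 0" using IVT'[of "\<lambda>c. a c - b c" l 0 r] by blast
  thus ?thesis by auto
qed

locale split_bvp =
  fixes h q :: "real \<Rightarrow> real" and \<gamma> \<alpha> :: real
  assumes gamma_pos: "0 < \<gamma>" and gamma_less: "\<gamma> < \<alpha>"
    and continuous_h: "continuous_on {0..\<alpha>} h" and continuous_q: "continuous_on {0..\<alpha>} q"
    and q_neg: "\<And>x. 0 < x \<Longrightarrow> x < \<gamma> \<Longrightarrow> q x < 0" and q_pos: "\<And>x. \<gamma> < x \<Longrightarrow> x < \<alpha> \<Longrightarrow> q x > 0"
begin

sublocale right: zeta_problem q h \<gamma> \<alpha>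
proof
  have "{\<gamma>..\<alpha>} \<subseteq> {0..\<alpha>}" using gamma_pos by auto
  thus "continuous_on {\<gamma>..\<alpha>} q" "continuous_on {\<gamma>..\<alpha>} h"
    using continuous_on_subset continuous_q continuous_h by blast+
qed (use gamma_less q_pos in auto)

text \<open>On [0, \<gamma>] the reflection x \<mapsto> 1 - x turns a solution with speed c into a solution
  of a zeta-problem with speed -c.\<close>
sublocale left: zeta_problem "\<lambda>\<phi>. - q (1 - \<phi>)" "\<lambda>\<phi>. - h (1 - \<phi>)" "1 - \<gamma>" 1
proof
  have "(\<lambda>\<phi>::real. 1 - \<phi>) ` {1 - \<gamma>..1} \<subseteq> {0..\<alpha>}" using gamma_less by auto
  thus "continuous_on {1 - \<gamma>..1} (\<lambda>\<phi>. - q (1 - \<phi>))" "continuous_on {1 - \<gamma>..1} (\<lambda>\<phi>. - h (1 - \<phi>))"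
    by (intro continuous_intros continuous_on_compose2[OF continuous_q] continuous_on_compose2[OF continuous_h];
        simp)+
qed (use gamma_pos q_neg in auto)

abbreviation "cstar_right \<equiv> cstar q h \<gamma> \<alpha>"
abbreviation "cstar_left \<equiv> - cstar (\<lambda>\<phi>. - q (1 - \<phi>)) (\<lambda>\<phi>. - h (1 - \<phi>)) (1 - \<gamma>) 1"

definition right_value :: "real \<Rightarrow> real" where "right_value c = right.zeta c \<gamma>"
definition left_value :: "real \<Rightarrow> real" where "left_value c = left.zeta (- c) (1 - \<gamma>)"
definition glued :: "real \<Rightarrow> real \<Rightarrow> real" where
  "glued c x = (if x \<le> \<gamma> then left.zeta (- c) (1 - x) else right.zeta c x)"

lemma bvp_solD:
  assumes "bvp_sol h q \<alpha> c z"
  shows "continuous_on {0..\<alpha>} z"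
    and "\<And>x. 0 < x \<Longrightarrow> x < \<alpha> \<Longrightarrow> (z has_real_derivative (h x - c - q x / z x)) (at x)"
    and "\<And>x. 0 < x \<Longrightarrow> x < \<alpha> \<Longrightarrow> z x < 0"
    and "z 0 = 0" "z \<alpha> = 0"
  using assms unfolding bvp_sol_def by auto

lemma bvp_sol_right:
  assumes z: "bvp_sol h q \<alpha> c z"
  shows "right.sol c z"
  unfolding zeta_cond_def
proof (intro conjI ballI)
  have "{\<gamma>..\<alpha>} \<subseteq> {0..\<alpha>}" using gamma_pos by auto
  with bvp_solD(1)[OF z] show "continuous_on {\<gamma>..\<alpha>} z" by (rule continuous_on_subset)
  show "z \<alpha> = 0" by (rule bvp_solD(5)[OF z])
  fix x assume "x \<in> {\<gamma><..<\<alpha>}"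
  hence x: "0 < x" "x < \<alpha>" using gamma_pos by auto
  show "(z has_real_derivative h x - c - q x / z x) (at x)" by (rule bvp_solD(2)[OF z x])
  show "z x < 0" by (rule bvp_solD(3)[OF z x])
qed

lemma bvp_sol_left:
  assumes z: "bvp_sol h q \<alpha> c z"
  shows "left.sol (- c) (\<lambda>\<phi>. z (1 - \<phi>))"
  unfolding zeta_cond_def
proof (intro conjI ballI)
  have img: "(\<lambda>\<phi>::real. 1 - \<phi>) ` {1 - \<gamma>..1} \<subseteq> {0..\<alpha>}" using gamma_less by auto
  show "continuous_on {1 - \<gamma>..1} (\<lambda>\<phi>. z (1 - \<phi>))"
    by (rule continuous_on_compose2[where f="\<lambda>\<phi>. 1 - \<phi>", OF bvp_solD(1)[OF z] _ img])
      (intro continuous_intros)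
  show "z (1 - 1) = 0" using bvp_solD(4)[OF z] by simp
  fix \<phi> assume "\<phi> \<in> {1 - \<gamma><..<1}"
  hence x: "0 < 1 - \<phi>" "1 - \<phi> < \<alpha>" using gamma_less by auto
  show "z (1 - \<phi>) < 0" by (rule bvp_solD(3)[OF z x])
  from has_real_derivative_reflect[OF bvp_solD(2)[OF z x]]
  show "((\<lambda>\<phi>. z (1 - \<phi>)) has_real_derivative - h (1 - \<phi>) - - c - - q (1 - \<phi>) / z (1 - \<phi>)) (at \<phi>)"
    by (simp add: algebra_simps)
qed

lemma bvp_sol_eq_glued:
  assumes z: "bvp_sol h q \<alpha> c z" and x: "x \<in> {0..\<alpha>}"
  shows "z x = glued c x"
proof (cases "x \<le> \<gamma>")
  case True
  hence "1 - x \<in> {1 - \<gamma>..1}" using x by auto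
  from left.zeta_c_eq[OF bvp_sol_left[OF z] this] show ?thesis using True by (simp add: glued_def)
next
  case False
  hence "x \<in> {\<gamma>..\<alpha>}" using x by auto
  from right.zeta_c_eq[OF bvp_sol_right[OF z] this] show ?thesis using False by (simp add: glued_def)
qed

lemma bvp_sol_values:
  assumes z: "bvp_sol h q \<alpha> c z"
  shows "right_value c = z \<gamma>" "left_value c = z \<gamma>" "z \<gamma> < 0"
proof -
  have "\<gamma> \<in> {\<gamma>..\<alpha>}" "\<gamma> \<in> {0..\<alpha>}" using gamma_pos gamma_less by auto
  show "right_value c = z \<gamma>" using right.zeta_c_eq[OF bvp_sol_right[OF z] \<open>\<gamma> \<in> {\<gamma>..\<alpha>}\<close>]
    by (simp add: right_value_def)
  show "left_value c = z \<gamma>" using bvp_sol_eq_glued[OF z \<open>\<gamma> \<in> {0..\<alpha>}\<close>]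
    by (simp add: left_value_def glued_def)
  show "z \<gamma> < 0" using bvp_solD(3)[OF z gamma_pos gamma_less] .
qed

lemma glued_continuous:
  assumes match: "right_value c = left_value c"
  shows "continuous_on {0..\<alpha>} (glued c)"
proof -
  have img: "(\<lambda>x::real. 1 - x) ` {0..\<gamma>} \<subseteq> {1 - \<gamma>..1}" using gamma_pos by auto
  have "continuous_on {0..\<gamma>} (\<lambda>x. left.zeta (- c) (1 - x))"
    by (rule continuous_on_compose2[where f="\<lambda>x. 1 - x", OF left.zeta_condD(1)[OF left.sol_zeta_c] _ img])
      (intro continuous_intros)
  hence left: "continuous_on {0..\<gamma>} (glued c)" by (rule continuous_on_eq) (simp add: glued_def)
  have "right.zeta c x = glued c x" if "x \<in> {\<gamma>..\<alpha>}" for x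
    using that match by (cases "x = \<gamma>") (simp_all add: glued_def right_value_def left_value_def)
  with right.zeta_condD(1)[OF right.sol_zeta_c] have "continuous_on {\<gamma>..\<alpha>} (glued c)"
    by (rule continuous_on_eq)
  with left have "continuous_on ({0..\<gamma>} \<union> {\<gamma>..\<alpha>}) (glued c)" by (intro continuous_on_closed_Un) auto
  moreover have "{0..\<gamma>} \<union> {\<gamma>..\<alpha>} = {0..\<alpha>}" using gamma_pos gamma_less by auto
  ultimately show ?thesis by simp
qed

lemma glued_neg:
  assumes match: "right_value c = left_value c" and neg: "right_value c < 0" and x: "0 < x" "x < \<alpha>"
  shows "glued c x < 0"
proof (cases x \<gamma> rule: linorder_cases)
  case less
  hence "left.zeta (- c) (1 - x) < 0" using x by (intro left.zeta_condD(3)[OF left.sol_zeta_c]) auto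
  thus ?thesis using less by (simp add: glued_def)
next
  case equal
  thus ?thesis using match neg by (simp add: glued_def right_value_def left_value_def)
next
  case greater
  hence "right.zeta c x < 0" using x by (intro right.zeta_condD(3)[OF right.sol_zeta_c])
  thus ?thesis using greater by (simp add: glued_def)
qed

lemma glued_deriv_off_gamma:
  assumes x: "0 < x" "x < \<alpha>" "x \<noteq> \<gamma>"
  shows "(glued c has_real_derivative h x - c - q x / glued c x) (at x)"
proof (cases "x < \<gamma>")
  case True
  have "(left.zeta (- c) has_real_derivative - h x - - c - - q x / left.zeta (- c) (1 - x)) (at (1 - x))"
    using left.zeta_condD(2)[OF left.sol_zeta_c[of "- c"], of "1 - x"] True x by simp
  from has_real_derivative_reflect[OF this]
  have "((\<lambda>x. left.zeta (- c) (1 - x)) has_real_derivative h x - c - q x / glued c x) (at x)"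
    using True by (simp add: glued_def)
  thus ?thesis
    by (rule has_field_derivative_transform_within_open[of _ _ _ "{0<..<\<gamma>}"])
      (use True x in \<open>auto simp: glued_def\<close>)
next
  case False
  hence "(right.zeta c has_real_derivative h x - c - q x / glued c x) (at x)"
    using right.zeta_condD(2)[OF right.sol_zeta_c, of x] x by (simp add: glued_def)
  thus ?thesis
    by (rule has_field_derivative_transform_within_open[of _ _ _ "{\<gamma><..<\<alpha>}"])
      (use False x in \<open>auto simp: glued_def\<close>)
qed

text \<open>Both pieces solve the same equation, so the glued function, once continuous at \<gamma>, is also
  differentiable there.\<close>
lemma bvp_sol_glued:
  assumes match: "right_value c = left_value c" and neg: "right_value c < 0"
  shows "bvp_sol h q \<alpha> c (glued c)"
proof -
  have cont: "continuous_on {0..\<alpha>} (glued c)" by (rule glued_continuous[OF match])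
  have deriv_gamma: "(glued c has_real_derivative h \<gamma> - c - q \<gamma> / glued c \<gamma>) (at \<gamma>)"
  proof (rule has_real_derivative_at_glue_point[where u="\<gamma> / 2" and v="(\<gamma> + \<alpha>) / 2"
        and E="\<lambda>t. h t - c - q t / glued c t"])
    show "\<gamma> / 2 < \<gamma>" "\<gamma> < (\<gamma> + \<alpha>) / 2" using gamma_pos gamma_less by auto
    have sub: "{\<gamma> / 2..(\<gamma> + \<alpha>) / 2} \<subseteq> {0..\<alpha>}" using gamma_pos gamma_less by auto
    show "continuous_on {\<gamma> / 2..(\<gamma> + \<alpha>) / 2} (glued c)" using continuous_on_subset[OF cont sub] .
    have "glued c t \<noteq> 0" if "t \<in> {\<gamma> / 2..(\<gamma> + \<alpha>) / 2}" for t
      using glued_neg[OF match neg, of t] that gamma_pos gamma_less by auto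
    thus "continuous_on {\<gamma> / 2..(\<gamma> + \<alpha>) / 2} (\<lambda>t. h t - c - q t / glued c t)"
      using continuous_on_subset[OF continuous_h sub] continuous_on_subset[OF continuous_q sub]
        continuous_on_subset[OF cont sub]
      by (intro continuous_intros) auto
  qed (use glued_deriv_off_gamma gamma_pos gamma_less in auto)
  show ?thesis unfolding bvp_sol_def
  proof (intro conjI ballI)
    show "glued c 0 = 0" using left.zeta_condD(4)[OF left.sol_zeta_c] gamma_pos by (simp add: glued_def)
    show "glued c \<alpha> = 0" using right.zeta_condD(4)[OF right.sol_zeta_c] gamma_less by (simp add: glued_def)
  next
    fix x assume "x \<in> {0<..<\<alpha>}"
    hence x: "0 < x" "x < \<alpha>" by simp_all
    show "glued c x < 0" by (rule glued_neg[OF match neg x])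
    show "(glued c has_real_derivative h x - c - q x / glued c x) (at x)"
    proof (cases "x = \<gamma>")
      case False
      thus ?thesis by (rule glued_deriv_off_gamma[OF x])
    qed (use deriv_gamma in simp)
  qed (rule cont)
qed

lemma right_value_neg_iff: "right_value c < 0 \<longleftrightarrow> ereal c < cstar_right"
  unfolding right_value_def by (rule right.zeta_left_neg_iff)

lemma left_value_neg_iff: "left_value c < 0 \<longleftrightarrow> cstar_left < ereal c"
  unfolding left_value_def left.zeta_left_neg_iff by (simp add: ereal_uminus_less_reorder)

lemma matching_speed_exists: "\<exists>c. right_value c = left_value c"
proof -
  obtain Kr where Kr: "\<forall>c. right.zeta c \<gamma> \<le> (\<alpha> - \<gamma>) * (Kr + c)"
    using right.zeta_left_linear_bound by blast
  obtain Kl where Kl: "\<forall>d. left.zeta d (1 - \<gamma>) \<le> (1 - (1 - \<gamma>)) * (Kl + d)"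
    using left.zeta_left_linear_bound by blast
  show ?thesis
  proof (rule exists_crossing[of right_value left_value "\<alpha> - \<gamma>" \<gamma> Kr Kl])
    show "isCont right_value c" for c unfolding right_value_def by (rule right.isCont_zeta_left)
    show "isCont left_value c" for c
      unfolding left_value_def by (rule continuous_at_compose[OF _ left.isCont_zeta_left, unfolded o_def])
        (intro continuous_intros)
    show "mono right_value"
      using right.zeta_mono gamma_less by (auto intro: monoI simp: right_value_def)
    show "antimono left_value"
      using left.zeta_mono gamma_pos by (auto intro: antimonoI simp: left_value_def)
    show "right_value c \<le> (\<alpha> - \<gamma>) * (Kr + c)" for c using Kr by (simp add: right_value_def)
    show "left_value c \<le> \<gamma> * (Kl - c)" for c using Kl[rule_format, of "- c"] by (simp add: left_value_def)
  qed (use gamma_pos gamma_less in auto)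
qed

lemma matching_speed_unique:
  assumes "right_value c = left_value c" "right_value c < 0"
    and "right_value c' = left_value c'" "right_value c' < 0"
  shows "c = c'"
proof -
  have no_cross: False
    if "d < d'" "right_value d = left_value d" "right_value d < 0" "right_value d' = left_value d'" for d d'
  proof -
    have "right_value d < right_value d'"
      using right.zeta_left_strict_mono[OF that(1) that(3)[unfolded right_value_def]]
      by (simp add: right_value_def)
    moreover have "left_value d' \<le> left_value d"
      using left.zeta_mono[of "- d'" "- d" "1 - \<gamma>"] that(1) gamma_pos by (simp add: left_value_def)
    ultimately show False using that(2,4) by simp
  qed
  show ?thesis using no_cross[of c c'] no_cross[of c' c] assms by (cases c c' rule: linorder_cases) auto
qed

lemma bvp_sol_matching:
  assumes "bvp_sol h q \<alpha> c z"
  shows "right_value c = left_value c" "right_value c < 0" "left_value c < 0"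
  using bvp_sol_values[OF assms] by simp_all

theorem bvp_solvable_iff: "(\<exists>c z. bvp_sol h q \<alpha> c z) \<longleftrightarrow> cstar_left < cstar_right"
proof
  assume "\<exists>c z. bvp_sol h q \<alpha> c z"
  then obtain c z where "bvp_sol h q \<alpha> c z" by blast
  hence "cstar_left < ereal c" "ereal c < cstar_right"
    using bvp_sol_matching right_value_neg_iff left_value_neg_iff by blast+
  thus "cstar_left < cstar_right" by (rule less_trans)
next
  assume "cstar_left < cstar_right"
  obtain c where match: "right_value c = left_value c" using matching_speed_exists by blast
  have "right_value c < 0"
  proof (rule ccontr)
    assume "\<not> right_value c < 0"
    hence "\<not> ereal c < cstar_right" "\<not> cstar_left < ereal c"
      using right_value_neg_iff[of c] left_value_neg_iff[of c] match by auto
    hence "cstar_right \<le> cstar_left" by (simp add: not_less)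
    thus False using \<open>cstar_left < cstar_right\<close> by simp
  qed
  thus "\<exists>c z. bvp_sol h q \<alpha> c z" using bvp_sol_glued[OF match] by blast
qed

theorem bvp_unique_speed_and_profile:
  assumes "cstar_left < cstar_right"
  shows "\<exists>c1. cstar_left < ereal c1 \<and> ereal c1 < cstar_right \<and> (\<exists>z. bvp_sol h q \<alpha> c1 z) \<and>
           (\<forall>c z. bvp_sol h q \<alpha> c z \<longrightarrow> c = c1) \<and>
           (\<forall>z1 z2. bvp_sol h q \<alpha> c1 z1 \<longrightarrow> bvp_sol h q \<alpha> c1 z2 \<longrightarrow> (\<forall>x\<in>{0..\<alpha>}. z1 x = z2 x))"
proof -
  obtain c1 z1 where z1: "bvp_sol h q \<alpha> c1 z1" using assms bvp_solvable_iff by blast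
  show ?thesis
  proof (intro exI[of _ c1] conjI allI impI ballI)
    show "cstar_left < ereal c1" "ereal c1 < cstar_right"
      using bvp_sol_matching[OF z1] right_value_neg_iff left_value_neg_iff by blast+
    show "\<exists>z. bvp_sol h q \<alpha> c1 z" using z1 by blast
    show "c = c1" if "bvp_sol h q \<alpha> c z" for c z
      using matching_speed_unique[OF bvp_sol_matching(1,2)[OF that] bvp_sol_matching(1,2)[OF z1]] .
    show "z x = z' x" if "bvp_sol h q \<alpha> c1 z" "bvp_sol h q \<alpha> c1 z'" "x \<in> {0..\<alpha>}" for z z' x
      using bvp_sol_eq_glued[OF that(1,3)] bvp_sol_eq_glued[OF that(2,3)] by simp
  qed
qed
end

theorem lemma4p4:
  fixes \<gamma> \<alpha> :: real and f h D g q :: "real \<Rightarrow> real"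
  assumes "0 < \<gamma>" and "\<gamma> < \<alpha>" and "\<alpha> < 1"
    and "\<forall>x\<in>{0..1}. (f has_real_derivative h x) (at x within {0..1})"
    and "continuous_on {0..1} h" and "f 0 = 0"
    and "\<exists>D'. (\<forall>x\<in>{0..1}. (D has_real_derivative D' x) (at x within {0..1}))
               \<and> continuous_on {0..1} D'"
    and "\<forall>x\<in>{0<..<\<alpha>}. D x > 0" and "\<forall>x\<in>{\<alpha><..<1}. D x < 0"
    and "continuous_on {0..1} g"
    and "\<forall>x\<in>{0<..<\<gamma>}. g x < 0" and "\<forall>x\<in>{\<gamma><..<1}. g x > 0"
    and "g 0 = 0" and "g \<gamma> = 0" and "g 1 = 0"
    and "\<forall>x. q x = D x * g x"
  defines "c11 \<equiv> - cstar (\<lambda>\<phi>. - q (1 - \<phi>)) (\<lambda>\<phi>. - h (1 - \<phi>)) (max (1 - \<alpha>) (1 - \<gamma>)) 1"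
    and "c12 \<equiv> cstar q h \<gamma> \<alpha>"
  shows "((\<exists>c z. bvp_sol h q \<alpha> c z) \<longleftrightarrow> c11 < c12) \<and>
         (c11 < c12 \<longrightarrow>
           (\<exists>c1. c11 < ereal c1 \<and> ereal c1 < c12 \<and>
                (\<exists>z. bvp_sol h q \<alpha> c1 z) \<and>
                (\<forall>c z. bvp_sol h q \<alpha> c z \<longrightarrow> c = c1) \<and>
                (\<forall>z1 z2. bvp_sol h q \<alpha> c1 z1 \<longrightarrow> bvp_sol h q \<alpha> c1 z2 \<longrightarrow>
                          (\<forall>x\<in>{0..\<alpha>}. z1 x = z2 x))))"
proof -
  have sub: "{0..\<alpha>} \<subseteq> {0..1}" using \<open>\<alpha> < 1\<close> by auto
  obtain D' where "\<forall>x\<in>{0..1}. (D has_real_derivative D' x) (at x within {0..1})" using assms(7) by blast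
  hence "continuous_on {0..1} D"
    unfolding continuous_on_eq_continuous_within using DERIV_continuous by blast
  moreover have "q = (\<lambda>x. D x * g x)" using assms(16) by auto
  ultimately have "continuous_on {0..1} q" using \<open>continuous_on {0..1} g\<close> by (simp add: continuous_on_mult)
  hence "continuous_on {0..\<alpha>} q" using continuous_on_subset[OF _ sub] by blast
  interpret split_bvp h q \<gamma> \<alpha>
  proof
    show "continuous_on {0..\<alpha>} h" using continuous_on_subset[OF \<open>continuous_on {0..1} h\<close> sub] .
    show "q x < 0" if "0 < x" "x < \<gamma>" for x
      using assms(8)[rule_format, of x] assms(11)[rule_format, of x] that \<open>\<gamma> < \<alpha>\<close>
      by (simp add: assms(16) mult_pos_neg)
    show "q x > 0" if "\<gamma> < x" "x < \<alpha>" for x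
      using assms(8)[rule_format, of x] assms(12)[rule_format, of x] that \<open>0 < \<gamma>\<close> \<open>\<alpha> < 1\<close>
      by (simp add: assms(16))
  qed (use assms(1,2) \<open>continuous_on {0..\<alpha>} q\<close> in auto)
  have thresholds: "c11 = cstar_left" "c12 = cstar_right"
    using \<open>\<gamma> < \<alpha>\<close> by (simp_all add: c11_def c12_def max_def)
  show ?thesis
  proof (intro conjI impI)
    show "(\<exists>c z. bvp_sol h q \<alpha> c z) \<longleftrightarrow> c11 < c12" using bvp_solvable_iff by (simp only: thresholds)
  qed (rule bvp_unique_speed_and_profile[folded thresholds])
qed

end
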